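(* Let $(\Omega,\mathbb{P},\sigma)$ be a symbolic dynamical system and $k\geq2$ an integer with $\underline{H}_k(\mathbb{P})>0$. Then for $\mathbb{P}^k$-almost every $(x^1,\dots,x^k)\in\Omega^k$, \[\limsup_{n\to+\infty}\frac{M_n(x^1,\dots,x^k)}{\log n}\leq\frac{k}{(k-1)\underline{H}_k(\mathbb{P})}.\] Moreover, if the system is $\alpha$-mixing with an exponential decay, or if it is $\psi$-mixing with $\psi(g)=g^{-a}$ for some $a>0$, then for $\mathbb{P}^k$-almost every $(x^1,\dots,x^k)\in\Omega^k$, \[\liminf_{n\to+\infty}\frac{M_n(x^1,\dots,x^k)}{\log n}\geq\frac{k}{(k-1)\overline{H}_k(\mathbb{P})}.\] Therefore, if (in addition) the generalized Rényi entropy $H_k(\mathbb{P})$ exists, then for $\mathbb{P}^k$-almost every $(x^1,\dots,x^k)$, \[\lim_{n\to+\infty}\frac{M_n(x^1,\dots,x^k)}{\log n}=\frac{k}{(k-1)H_k(\mathbb{P})}.\]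
   Context: $\Omega=\mathcal{A}^{\mathbb{N}}$ for an alphabet $\mathcal{A}$, $\sigma$ is the left shift and $\mathbb{P}$ is a $\sigma$-invariant probability measure; $\mathbb{P}^k$ is the product measure. For $y\in\Omega$, $C_n(y)=\{z\in\Omega: z_i=y_i \text{ for } 0\leq i\leq n-1\}$ is the $n$-cylinder of $y$; $\mathcal{F}_0^n$ is the $\sigma$-algebra generated by $n$-cylinders. $\sum\mathbb{P}(C_n)^k$ denotes $\sum_{y\in\mathcal{A}^n}\mathbb{P}(C_n(y))^k$ (sum over all $n$-cylinders). $\underline{H}_k(\mathbb{P})=\liminf_{n\to\infty}\frac{\log\sum\mathbb{P}(C_n)^k}{-(k-1)n}$, $\overline{H}_k(\mathbb{P})$ the same with $\limsup$, and $H_k(\mathbb{P})$ their common value when equal. For $x^1,\dots,x^k\in\Omega$, \[M_n(x^1,\dots,x^k)=\max\{m: x^1_{i_1+j}=\cdots=x^k_{i_k+j}\text{ for } j=0,\dots,m-1 \text{ for some } 0\leq i_1,\dots,i_k\leq n-m\}.\] The system is $\alpha$-mixing if there is $\alpha:\mathbb{N}\to\mathbb{R}$ with $\alpha(g)\to0$ such that for all $m,n$, $A\in\mathcal{F}_0^n$, $B\in\mathcal{F}_0^m$: $|\mathbb{P}(A\cap\sigma^{-g-n}B)-\mathbb{P}(A)\mathbb{P}(B)|\leq\alpha(g)$; with exponential decay if $\alpha(g)$ decreases exponentially fast to $0$. It is $\psi$-mixing if there is $\psi$ with $\psi(g)\to0$ such that $|\mathbb{P}(A\cap\sigma^{-g-n}B)-\mathbb{P}(A)\mathbb{P}(B)|\leq\psi(g)\mathbb{P}(A)\mathbb{P}(B)$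 for all such $A,B$. *)

theory Defs
  imports "HOL-Probability.Probability"
begin

definition shift :: "(nat \<Rightarrow> 'a) \<Rightarrow> (nat \<Rightarrow> 'a)" where
  "shift x = (\<lambda>i. x (Suc i))"

definition shift_pre :: "nat \<Rightarrow> (nat \<Rightarrow> 'a) set \<Rightarrow> (nat \<Rightarrow> 'a) set" where
  "shift_pre t B = {z. (\<lambda>i. z (i + t)) \<in> B}"

text \<open>Cylinder determined by the word w (the |w|-cylinder of any y extending w).\<close>
definition cyl :: "'a list \<Rightarrow> (nat \<Rightarrow> 'a) set" where
  "cyl w = {z. \<forall>i<length w. z i = w ! i}"

text \<open>The sigma-algebra F_0^n generated by n-cylinders (finite alphabet: unions of n-cylinders).\<close>
definition cyl_alg :: "nat \<Rightarrow> (nat \<Rightarrow> 'a::finite) set set" where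
  "cyl_alg n = {A. \<exists>W \<subseteq> {w. length w = n}. A = \<Union> (cyl ` W)}"

definition symbolic_system :: "(nat \<Rightarrow> 'a) measure \<Rightarrow> bool" where
  "symbolic_system M \<longleftrightarrow> prob_space M
     \<and> sets M = sets (PiM UNIV (\<lambda>_. count_space UNIV))
     \<and> shift \<in> measurable M M \<and> distr M M shift = M"

definition cyl_sum :: "(nat \<Rightarrow> 'a::finite) measure \<Rightarrow> nat \<Rightarrow> nat \<Rightarrow> real" where
  "cyl_sum M k n = (\<Sum>w\<in>{w::'a list. length w = n}. measure M (cyl w) ^ k)"

definition renyi_lower :: "(nat \<Rightarrow> 'a::finite) measure \<Rightarrow> nat \<Rightarrow> ereal" where
  "renyi_lower M k = liminf (\<lambda>n. ereal (ln (cyl_sum M k n) / (- (real k - 1) * real n)))"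

definition renyi_upper :: "(nat \<Rightarrow> 'a::finite) measure \<Rightarrow> nat \<Rightarrow> ereal" where
  "renyi_upper M k = limsup (\<lambda>n. ereal (ln (cyl_sum M k n) / (- (real k - 1) * real n)))"

text \<open>M_n(x^1,...,x^k), with x^j written x (j-1), j < k.\<close>
definition match_len :: "nat \<Rightarrow> (nat \<Rightarrow> nat \<Rightarrow> 'a) \<Rightarrow> nat \<Rightarrow> nat" where
  "match_len k x n = Max {m. m \<le> n \<and> (\<exists>i::nat \<Rightarrow> nat. (\<forall>j<k. i j \<le> n - m) \<and>
      (\<forall>l<m. \<forall>j<k. \<forall>j'<k. x j (i j + l) = x j' (i j' + l)))}"

definition alpha_mixing_exp :: "(nat \<Rightarrow> 'a::finite) measure \<Rightarrow> bool" where
  "alpha_mixing_exp M \<longleftrightarrow> (\<exists>C \<theta>::real. 0 < \<theta> \<and> \<theta> < 1 \<and>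
     (\<forall>g n m A B. A \<in> cyl_alg n \<longrightarrow> B \<in> cyl_alg m \<longrightarrow>
        \<bar>measure M (A \<inter> shift_pre (g + n) B) - measure M A * measure M B\<bar> \<le> C * \<theta> ^ g))"

text \<open>psi-mixing with psi(g) = g^(-a); for g = 0 psi(0) = infinity imposes no constraint.\<close>
definition psi_mixing_poly :: "(nat \<Rightarrow> 'a::finite) measure \<Rightarrow> real \<Rightarrow> bool" where
  "psi_mixing_poly M a \<longleftrightarrow>
     (\<forall>g\<ge>1. \<forall>n m A B. A \<in> cyl_alg n \<longrightarrow> B \<in> cyl_alg m \<longrightarrow>
        \<bar>measure M (A \<inter> shift_pre (g + n) B) - measure M A * measure M B\<bar>
          \<le> real g powr (- a) * measure M A * measure M B)"

end

theory Submission
  imports Defs "HOL-Real_Asymp.Real_Asymp"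
begin

(* Upper bound: M_n >= m forces the k sequences to carry a common word of length m at some
   positions i_1, ..., i_k <= n - m; for fixed positions this has probability
   sum_w P(C_m(w))^k = cyl_sum M k m, which decays like exp (-(k - 1) m H) for every H below the
   lower Renyi entropy. For m ~ c log n with c (k - 1) H > k the union bound over the at most
   (n + 1)^k position tuples is summable along n = 2^l, and Borel-Cantelli together with the
   monotonicity of M_n in n gives limsup M_n / log n <= c.
   Lower bound: for c (k - 1) H < k with H above the upper Renyi entropy, only positions on a grid
   of mesh m + g with gaps g ~ n^e are probed. Mixing makes matches at distinct grid points nearly
   independent, so the second moment method bounds the probability that no grid k-tuple matches
   by a negative power of n, and Borel-Cantelli along n = 2^l applies again. *)

lemma power_add_le_mean_value:
  fixes u v :: real
  assumes "0 \<le> u" "0 \<le> v"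
  shows "(u + v)^k \<le> v^k + real k * u * (u + v)^(k - 1)"
proof (induction k)
  case (Suc k)
  have "(u + v)^Suc k \<le> (u + v) * (v^k + real k * u * (u + v)^(k - 1))"
    using Suc assms by (simp add: mult_left_mono)
  also have "\<dots> = v^Suc k + u * v^k + real k * u * ((u + v) * (u + v)^(k - 1))"
    by (simp add: algebra_simps)
  also have "\<dots> \<le> v^Suc k + u * (u + v)^k + real k * u * (u + v)^k"
  proof -
    have "u * v^k \<le> u * (u + v)^k" using assms by (intro mult_left_mono power_mono) auto
    moreover have "real k * u * ((u + v) * (u + v)^(k - 1)) = real k * u * (u + v)^k" by (cases k) auto
    ultimately show ?thesis by linarith
  qed
  finally show ?case by (simp add: algebra_simps)
qed simp

lemma power_sum3_le:
  fixes a b c :: real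
  assumes "0 \<le> a" "0 \<le> b" "0 \<le> c"
  shows "(a + b + c)^r \<le> 3^r * (a^r + b^r + c^r)"
proof -
  define z where "z = max a (max b c)"
  have "(a + b + c)^r \<le> (3 * z)^r"
    using assms by (intro power_mono) (auto simp: z_def)
  also have "\<dots> = 3^r * z^r" by (simp add: power_mult_distrib)
  also have "z^r \<le> a^r + b^r + c^r"
    using assms by (auto simp: z_def max_def)
  finally show ?thesis by simp
qed

lemma power_pred_eq_powr:
  fixes p :: real
  assumes "0 \<le> p" "2 \<le> k"
  shows "p^(k - 1) = (p^k) powr ((real k - 1) / real k)"
proof (cases "p = 0")
  case True
  then show ?thesis using assms(2) by (simp add: power_0_left)
next
  case False
  then have "(p^k) powr ((real k - 1) / real k) = p powr (real (k - 1))"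
    using assms by (simp add: powr_realpow[symmetric] powr_powr of_nat_diff)
  then show ?thesis using False assms(1) by (simp add: powr_realpow)
qed

lemma le_ln_div_neg_iff:
  fixes a b s H :: real
  assumes "0 < a * b" "0 < s"
  shows "H \<le> ln s / (- a * b) \<longleftrightarrow> s \<le> exp (- a * b * H)"
proof -
  have "H \<le> ln s / (- a * b) \<longleftrightarrow> ln s / (a * b) \<le> - H"
    using minus_divide_right[of "ln s" "a * b"] by auto
  also have "\<dots> \<longleftrightarrow> ln s \<le> - a * b * H" using assms(1) by (simp add: pos_divide_le_eq mult.commute)
  also have "\<dots> \<longleftrightarrow> s \<le> exp (- a * b * H)" using assms(2) by (metis exp_gt_zero ln_exp ln_le_cancel_iff)
  finally show ?thesis .
qed

lemma ln_div_neg_le_iff: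
  fixes a b s H :: real
  assumes "0 < a * b" "0 < s"
  shows "ln s / (- a * b) \<le> H \<longleftrightarrow> exp (- a * b * H) \<le> s"
proof -
  have "ln s / (- a * b) \<le> H \<longleftrightarrow> - H \<le> ln s / (a * b)"
    using minus_divide_right[of "ln s" "a * b"] by auto
  also have "\<dots> \<longleftrightarrow> - a * b * H \<le> ln s" using assms(1) by (simp add: pos_le_divide_eq mult.commute)
  also have "\<dots> \<longleftrightarrow> exp (- a * b * H) \<le> s" using assms(2) by (metis exp_gt_zero ln_exp ln_le_cancel_iff)
  finally show ?thesis .
qed

lemma divide_mult_less_swap:
  fixes x y z w :: real
  assumes "0 < y" "0 < z" "0 < w"
  shows "x / (y * z) < w \<longleftrightarrow> x / (y * w) < z"
  using assms by (simp add: divide_less_eq mult_ac)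

lemma less_divide_mult_swap:
  fixes x y z w :: real
  assumes "0 < y" "0 < z" "0 < w"
  shows "w < x / (y * z) \<longleftrightarrow> z < x / (y * w)"
  using assms by (simp add: less_divide_eq mult_ac)

lemma tendsto_if_limsup_le_liminf:
  fixes f :: "nat \<Rightarrow> ereal"
  assumes "limsup f \<le> B" "B \<le> liminf f"
  shows "f \<longlonglongrightarrow> B"
proof -
  have "liminf f \<le> limsup f" by (rule Liminf_le_Limsup) simp
  then have "liminf f = B" "limsup f = B" using assms by (auto intro: antisym)
  then show ?thesis by (intro Liminf_eq_Limsup) auto
qed

lemma eventually_dyadic_block:
  assumes "eventually P sequentially"
  shows "eventually (\<lambda>n. \<exists>l. P l \<and> 2^l \<le> n \<and> n < 2^(l+1)) sequentially"
proof -
  obtain L where L: "\<And>l. L \<le> l \<Longrightarrow> P l" using assms unfolding eventually_sequentially by blast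
  have "\<exists>l. P l \<and> 2^l \<le> n \<and> n < 2^(l+1)" if "2^L \<le> n" for n :: nat
  proof -
    have "1 \<le> n" using that one_le_power[of "2::nat" L] by linarith
    then obtain l where l: "2^l \<le> n" "n < 2^(l+1)" using ex_power_ivl1[of 2 n] by auto
    have "L \<le> l"
    proof (rule ccontr)
      assume "\<not> L \<le> l"
      then have "(2::nat)^(l+1) \<le> 2^L" by (intro power_increasing) auto
      then show False using that l(2) by simp
    qed
    then show ?thesis using L l by blast
  qed
  then show ?thesis unfolding eventually_sequentially by blast
qed

lemma limsup_le_of_dyadic_bound:
  fixes f :: "nat \<Rightarrow> nat" and c K :: real
  assumes "mono f" "0 \<le> c"
    and "eventually (\<lambda>l. real (f (2^(l+1))) \<le> c * (real l * ln 2) + K) sequentially"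
  shows "limsup (\<lambda>n. ereal (real (f n) / ln (real n))) \<le> ereal c"
proof -
  have "eventually (\<lambda>n. real (f n) / ln (real n) \<le> c + K / ln (real n)) sequentially"
    using eventually_conj[OF eventually_dyadic_block[OF assms(3)] eventually_ge_at_top[of 2]]
  proof eventually_elim
    case (elim n)
    then obtain l where l: "real (f (2^(l+1))) \<le> c * (real l * ln 2) + K" "2^l \<le> n" "n < 2^(l+1)"
      by blast
    have "real (f n) \<le> real (f (2^(l+1)))" using monoD[OF assms(1)] l(3) by simp
    moreover have "real l * ln 2 \<le> ln (real n)"
    proof -
      have "(2::real)^l \<le> real n" using l(2) by (metis of_nat_le_iff of_nat_numeral of_nat_power)
      then show ?thesis using elim by (simp add: ln_realpow[symmetric])
    qed
    then have "c * (real l * ln 2) \<le> c * ln (real n)" using assms(2) by (rule mult_left_mono)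
    ultimately have "real (f n) \<le> c * ln (real n) + K"
      using l(1) by linarith
    moreover have "0 < ln (real n)" using elim by simp
    ultimately show ?case by (simp add: divide_le_eq add_divide_distrib algebra_simps)
  qed
  then have "limsup (\<lambda>n. ereal (real (f n) / ln (real n))) \<le> limsup (\<lambda>n. ereal (c + K / ln (real n)))"
    by (intro Limsup_mono) (auto elim: eventually_mono)
  also have "\<dots> = ereal c"
    by (intro lim_imp_Limsup tendsto_ereal) (simp_all, real_asymp)
  finally show ?thesis .
qed

lemma liminf_ge_of_dyadic_bound:
  fixes f :: "nat \<Rightarrow> nat" and c K :: real
  assumes "mono f" "0 \<le> c"
    and "eventually (\<lambda>l. c * (real l * ln 2) - K \<le> real (f (2^l))) sequentially"
  shows "ereal c \<le> liminf (\<lambda>n. ereal (real (f n) / ln (real n)))"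
proof -
  have "eventually (\<lambda>n. c - (c * ln 2 + K) / ln (real n) \<le> real (f n) / ln (real n)) sequentially"
    using eventually_conj[OF eventually_dyadic_block[OF assms(3)] eventually_ge_at_top[of 2]]
  proof eventually_elim
    case (elim n)
    then obtain l where l: "c * (real l * ln 2) - K \<le> real (f (2^l))" "2^l \<le> n" "n < 2^(l+1)"
      by blast
    have "real (f (2^l)) \<le> real (f n)" using monoD[OF assms(1)] l(2) by simp
    moreover have "c * ln (real n) \<le> c * (real l * ln 2) + c * ln 2"
    proof -
      have "real n \<le> (2::real)^(l+1)" using l(3) by (metis less_imp_le of_nat_le_iff of_nat_numeral of_nat_power)
      then have "ln (real n) \<le> ln ((2::real)^(l+1))" using elim by simp
      also have "\<dots> = (real l + 1) * ln 2" by (subst ln_realpow) auto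
      finally show ?thesis using assms(2) by (auto dest: mult_left_mono simp: algebra_simps)
    qed
    ultimately have "c * ln (real n) - (c * ln 2 + K) \<le> real (f n)"
      using l(1) by linarith
    then have "(c * ln (real n) - (c * ln 2 + K)) / ln (real n) \<le> real (f n) / ln (real n)"
      using elim by (intro divide_right_mono) auto
    moreover have "0 < ln (real n)" using elim by simp
    ultimately show ?case by (simp add: diff_divide_distrib)
  qed
  then have "liminf (\<lambda>n. ereal (c - (c * ln 2 + K) / ln (real n))) \<le> liminf (\<lambda>n. ereal (real (f n) / ln (real n)))"
    by (intro Liminf_mono) (auto elim: eventually_mono)
  moreover have "liminf (\<lambda>n. ereal (c - (c * ln 2 + K) / ln (real n))) = ereal c"
    by (intro lim_imp_Liminf tendsto_ereal) (simp_all, real_asymp)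
  ultimately show ?thesis by simp
qed

lemma sum_PiE_prod_pairs:
  fixes G :: "nat \<Rightarrow> nat \<Rightarrow> real"
  shows "(\<Sum>t\<in>PiE {..<k} (\<lambda>_. {..<N}). \<Sum>t'\<in>PiE {..<k} (\<lambda>_. {..<N}). \<Prod>j<k. G (t j) (t' j))
         = (\<Sum>a<N. \<Sum>b<N. G a b)^k"
proof -
  have "(\<Sum>t'\<in>PiE {..<k} (\<lambda>_. {..<N}). \<Prod>j<k. G (t j) (t' j)) = (\<Prod>j<k. \<Sum>b<N. G (t j) b)" for t
    by (rule prod_sum_PiE[symmetric]) auto
  moreover have "(\<Sum>t\<in>PiE {..<k} (\<lambda>_. {..<N}). \<Prod>j<k. \<Sum>b<N. G (t j) b) = (\<Prod>j<k. \<Sum>a<N. \<Sum>b<N. G a b)"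
    by (rule prod_sum_PiE[where f="\<lambda>j a. \<Sum>b<N. G a b", symmetric]) auto
  ultimately show ?thesis by simp
qed

lemma sum_swap_pairs:
  "(\<Sum>a\<in>A. \<Sum>b\<in>B. \<Sum>c\<in>C. \<Sum>d\<in>D. f a b c d) = (\<Sum>c\<in>C. \<Sum>d\<in>D. \<Sum>a\<in>A. \<Sum>b\<in>B. f a b c d)"
proof -
  have "(\<Sum>a\<in>A. \<Sum>b\<in>B. \<Sum>c\<in>C. \<Sum>d\<in>D. f a b c d) = (\<Sum>a\<in>A. \<Sum>c\<in>C. \<Sum>b\<in>B. \<Sum>d\<in>D. f a b c d)"
    by (rule sum.cong[OF refl]) (rule sum.swap)
  also have "\<dots> = (\<Sum>c\<in>C. \<Sum>a\<in>A. \<Sum>d\<in>D. \<Sum>b\<in>B. f a b c d)"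
    by (subst sum.swap) (intro sum.cong refl sum.swap)
  also have "\<dots> = (\<Sum>c\<in>C. \<Sum>d\<in>D. \<Sum>a\<in>A. \<Sum>b\<in>B. f a b c d)"
    by (rule sum.cong[OF refl]) (rule sum.swap)
  finally show ?thesis .
qed

lemma (in prob_space) prob_not_Union_le_second_moment:
  fixes A :: "'i \<Rightarrow> 'a set"
  assumes T: "finite T" and A: "\<And>t. t \<in> T \<Longrightarrow> A t \<in> events"
    and mu: "\<mu> = (\<Sum>t\<in>T. prob (A t))" "\<mu> > 0"
  shows "prob (space M - (\<Union>t\<in>T. A t)) \<le> ((\<Sum>t\<in>T. \<Sum>t'\<in>T. prob (A t \<inter> A t')) - \<mu>^2) / \<mu>^2"
proof -
  \<comment> \<open>Chebyshev for the number S of events that occur, which vanishes off the union.\<close>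
  define S where "S x = (\<Sum>t\<in>T. indicator (A t) x :: real)" for x
  define B where "B = space M - (\<Union>t\<in>T. A t)"
  have Bs: "B \<in> events" unfolding B_def using A T by auto
  have ii: "integrable M (indicator C :: _ \<Rightarrow> real)" if "C \<in> events" for C
    using that by (simp add: integrable_indicator_iff emeasure_finite less_top[symmetric] sets.Int_space_eq2)
  have iS: "integrable M S" unfolding S_def using ii A by auto
  have intS: "integral\<^sup>L M S = \<mu>"
    unfolding S_def mu using ii A by (simp add: sets.Int_space_eq2)
  have SS: "S x * S x = (\<Sum>t\<in>T. \<Sum>t'\<in>T. indicator (A t \<inter> A t') x)" for x
    unfolding S_def sum_product by (simp add: indicator_inter_arith)
  have iSS: "integrable M (\<lambda>x. S x * S x)" unfolding SS using ii A by auto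
  have intSS: "integral\<^sup>L M (\<lambda>x. S x * S x) = (\<Sum>t\<in>T. \<Sum>t'\<in>T. prob (A t \<inter> A t'))"
    unfolding SS using ii A by (simp add: sets.Int_space_eq2 Int_assoc)
  have sq: "(S x - \<mu>)^2 = S x * S x - 2 * \<mu> * S x + \<mu>^2" for x
    by (simp add: power2_eq_square algebra_simps)
  have i2: "integrable M (\<lambda>x. (S x - \<mu>)^2)" unfolding sq using iS iSS by auto
  have int2: "integral\<^sup>L M (\<lambda>x. (S x - \<mu>)^2) = (\<Sum>t\<in>T. \<Sum>t'\<in>T. prob (A t \<inter> A t')) - \<mu>^2"
    unfolding sq using iS iSS intS intSS prob_space by (simp add: power2_eq_square)
  have le: "\<mu>^2 * indicator B x \<le> (S x - \<mu>)^2" for x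
  proof (cases "x \<in> B")
    case True
    then have "S x = 0" unfolding S_def B_def by (auto intro!: sum.neutral)
    then show ?thesis using True by simp
  qed simp
  have "\<mu>^2 * prob B = integral\<^sup>L M (\<lambda>x. \<mu>^2 * indicator B x)"
    using Bs by (simp add: sets.Int_space_eq2)
  also have "\<dots> \<le> integral\<^sup>L M (\<lambda>x. (S x - \<mu>)^2)"
    using ii[OF Bs] i2 le by (intro integral_mono) auto
  finally have "\<mu>^2 * prob B \<le> (\<Sum>t\<in>T. \<Sum>t'\<in>T. prob (A t \<inter> A t')) - \<mu>^2" using int2 by simp
  then show ?thesis unfolding B_def[symmetric] using mu by (simp add: field_simps)
qed

lemma (in prob_space) AE_eventually_not_in_if_geometric:
  assumes "\<And>l. B l \<in> events" "0 \<le> \<rho>" "\<rho> < 1"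
    and "eventually (\<lambda>l. prob (B l) \<le> C * \<rho>^l) sequentially"
  shows "AE x in M. eventually (\<lambda>l. x \<notin> B l) sequentially"
proof -
  have "summable (\<lambda>l. prob (B l))"
  proof (rule summable_comparison_test_ev)
    show "eventually (\<lambda>l. norm (prob (B l)) \<le> C * \<rho>^l) sequentially" using assms(4) by simp
    show "summable (\<lambda>l. C * \<rho>^l)" using assms(2,3) by (intro summable_mult summable_geometric) auto
  qed
  then have "AE x in M. eventually (\<lambda>l. x \<in> space M - B l) sequentially"
    using assms(1) by (intro borel_cantelli_AE1) (simp_all add: less_top[symmetric])
  then show ?thesis by (auto elim: eventually_mono)
qed

lemma AE_le_ereal_if_AE_le_above:
  assumes "\<And>c. b < c \<Longrightarrow> AE x in M. f x \<le> ereal c"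
  shows "AE x in M. f x \<le> ereal b"
proof -
  define c where "c r = b + inverse (real (Suc r))" for r
  have "AE x in M. \<forall>r. f x \<le> ereal (c r)"
    unfolding AE_all_countable by (auto intro: assms simp: c_def)
  moreover have "(\<lambda>r. ereal (c r)) \<longlonglongrightarrow> ereal b"
    unfolding c_def by (intro tendsto_ereal) real_asymp
  ultimately show ?thesis
    by (elim AE_mp) (auto intro!: AE_I2 LIMSEQ_le_const)
qed

lemma AE_ge_ereal_if_AE_ge_below:
  assumes "a < b" "\<And>c. a < c \<Longrightarrow> c < b \<Longrightarrow> AE x in M. ereal c \<le> f x"
  shows "AE x in M. ereal b \<le> f x"
proof -
  define c where "c r = b - (b - a) * inverse (real (Suc (Suc r)))" for r
  have "a < c r \<and> c r < b" for r
  proof -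
    have "0 < inverse (real (Suc (Suc r)))" "inverse (real (Suc (Suc r))) < 1"
      by (auto simp: inverse_less_1_iff)
    then have "0 < (b - a) * inverse (real (Suc (Suc r)))" "(b - a) * inverse (real (Suc (Suc r))) < b - a"
      using assms(1) by (auto simp: mult_less_cancel_left1)
    then show ?thesis by (auto simp: c_def)
  qed
  then have "AE x in M. \<forall>r. ereal (c r) \<le> f x"
    unfolding AE_all_countable by (auto intro: assms(2))
  moreover have "(\<lambda>r. ereal (c r)) \<longlonglongrightarrow> ereal b"
    unfolding c_def by (intro tendsto_ereal) real_asymp
  ultimately show ?thesis
    by (elim AE_mp) (auto intro!: AE_I2 LIMSEQ_le_const2)
qed

lemma shift_pre_add: "shift_pre a (shift_pre b B) = shift_pre (a + b) B"
  by (simp add: shift_pre_def ac_simps)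

lemma shift_pre_Int: "shift_pre a (A \<inter> B) = shift_pre a A \<inter> shift_pre a B"
  by (auto simp: shift_pre_def)

lemma mem_shift_pre_cyl_iff: "z \<in> shift_pre a (cyl w) \<longleftrightarrow> (\<forall>i<length w. z (a + i) = w ! i)"
  by (auto simp: shift_pre_def cyl_def add.commute)

lemma cyl_disjoint:
  assumes "length w = length w'" "w \<noteq> w'"
  shows "cyl w \<inter> cyl w' = {}"
proof -
  obtain i where "i < length w" "w ! i \<noteq> w' ! i" using assms nth_equalityI[of w w'] by auto
  then show ?thesis using assms by (auto simp: cyl_def)
qed

lemma finite_words [simp]: "finite {w::'a::finite list. length w = m}"
  using finite_lists_length_eq[of "UNIV::'a set" m] by simp

lemma card_words: "card {w::'a::finite list. length w = m} = CARD('a) ^ m"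
  using card_lists_length_eq[of "UNIV::'a set" m] by simp

lemma UN_cyl_eq_UNIV: "(\<Union>w\<in>{w. length w = m}. cyl w) = UNIV"
proof -
  have "z \<in> cyl (map z [0..<m])" for z :: "nat \<Rightarrow> 'a" by (auto simp: cyl_def)
  then show ?thesis by (auto intro!: exI[of _ "map _ [0..<m]"])
qed

lemma cyl_in_cyl_alg: "length w = m \<Longrightarrow> cyl w \<in> cyl_alg m"
  unfolding cyl_alg_def by (intro CollectI exI[of _ "{w}"]) auto

lemma match_len_attained:
  "match_len k x n \<le> n \<and> (\<exists>i. (\<forall>j<k. i j + match_len k x n \<le> n) \<and>
     (\<forall>l<match_len k x n. \<forall>j<k. \<forall>j'<k. x j (i j + l) = x j' (i j' + l)))"
proof -
  define S where "S = {m. m \<le> n \<and> (\<exists>i::nat \<Rightarrow> nat. (\<forall>j<k. i j \<le> n - m) \<and>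
      (\<forall>l<m. \<forall>j<k. \<forall>j'<k. x j (i j + l) = x j' (i j' + l)))}"
  have "finite S" by (rule finite_subset[of _ "{..n}"]) (auto simp: S_def)
  moreover have "0 \<in> S" unfolding S_def by (intro CollectI conjI exI[of _ "\<lambda>_. 0"]) auto
  ultimately have "Max S \<in> S" by (intro Max_in) auto
  moreover have "match_len k x n = Max S" by (simp add: S_def match_len_def)
  ultimately show ?thesis unfolding S_def by (simp add: le_diff_conv2 cong: conj_cong)
qed

lemma le_match_len:
  assumes "m \<le> n" "\<forall>j<k. i j + m \<le> n" "\<forall>l<m. \<forall>j<k. \<forall>j'<k. x j (i j + l) = x j' (i j' + l)"
  shows "m \<le> match_len k x n"
proof -
  define S where "S = {m. m \<le> n \<and> (\<exists>i::nat \<Rightarrow> nat. (\<forall>j<k. i j \<le> n - m) \<and>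
      (\<forall>l<m. \<forall>j<k. \<forall>j'<k. x j (i j + l) = x j' (i j' + l)))}"
  have "finite S" by (rule finite_subset[of _ "{..n}"]) (auto simp: S_def)
  moreover have "\<forall>j<k. i j \<le> n - m" using assms(2) by (simp add: le_diff_conv2[OF assms(1)])
  then have "m \<in> S" unfolding S_def using assms(1,3) by blast
  moreover have "match_len k x n = Max S" by (simp add: S_def match_len_def)
  ultimately show ?thesis by simp
qed

lemma mono_match_len: "mono (match_len k x)"
proof (rule monoI)
  fix n n' :: nat assume "n \<le> n'"
  moreover obtain i where "match_len k x n \<le> n" "\<forall>j<k. i j + match_len k x n \<le> n"
    "\<forall>l<match_len k x n. \<forall>j<k. \<forall>j'<k. x j (i j + l) = x j' (i j' + l)"
    using match_len_attained by blast
  ultimately show "match_len k x n \<le> match_len k x n'"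
    by (intro le_match_len[of _ _ _ i]) (meson order_trans)+
qed

locale symbolic_dynamics =
  fixes M :: "(nat \<Rightarrow> 'a::finite) measure"
  assumes symbolic_system: "symbolic_system M"
begin

sublocale M: prob_space M
  using symbolic_system by (simp add: symbolic_system_def)

abbreviation p :: "'a list \<Rightarrow> real" where
  "p w \<equiv> measure M (cyl w)"

lemma sets_M: "sets M = sets (PiM UNIV (\<lambda>_. count_space UNIV))"
  using symbolic_system by (simp add: symbolic_system_def)

lemma space_M [simp]: "space M = UNIV"
  using sets_eq_imp_space_eq[OF sets_M] by (simp add: space_PiM)

lemma cyl_sets [measurable]: "cyl w \<in> sets M"
proof -
  have "(\<lambda>z. z i) \<in> measurable M (count_space UNIV)" for i
    using measurable_component_singleton[of i UNIV "\<lambda>_. count_space UNIV"]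
    by (simp add: measurable_cong_sets[OF sets_M refl])
  then have "{z. z i = a} \<in> sets M" for i a
    using measurable_sets[of "\<lambda>z. z i" M "count_space UNIV" "{a}"] by (simp add: vimage_def)
  moreover have "cyl w = {z\<in>space M. \<forall>i\<in>{..<length w}. z i = w ! i}"
    by (auto simp: cyl_def)
  ultimately show ?thesis by (simp only:) (intro sets.sets_Collect_finite_All; simp)
qed

lemma shift_pre_sets_measure:
  assumes "A \<in> sets M"
  shows "shift_pre t A \<in> sets M \<and> measure M (shift_pre t A) = measure M A"
proof (induction t)
  case 0
  then show ?case using assms by (simp add: shift_pre_def)
next
  case (Suc t)
  have shift: "shift \<in> measurable M M" "distr M M shift = M"
    using symbolic_system by (auto simp: symbolic_system_def)
  have "shift_pre (Suc t) A = shift -` shift_pre t A \<inter> space M"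
    by (auto simp: shift_pre_def shift_def)
  moreover have "shift -` shift_pre t A \<inter> space M \<in> sets M"
    using Suc shift(1) by (intro measurable_sets) auto
  moreover have "measure M (shift -` shift_pre t A \<inter> space M) = measure (distr M M shift) (shift_pre t A)"
    using Suc shift(1) by (subst measure_distr) auto
  ultimately show ?case using Suc shift(2) by simp
qed

lemma shift_pre_sets [measurable]: "A \<in> sets M \<Longrightarrow> shift_pre t A \<in> sets M"
  using shift_pre_sets_measure by blast

lemma measure_shift_pre: "A \<in> sets M \<Longrightarrow> measure M (shift_pre t A) = measure M A"
  using shift_pre_sets_measure by blast

lemma sum_cyl_prob: "(\<Sum>w\<in>{w. length w = m}. p w) = 1"
proof -
  have "(\<Sum>w\<in>{w. length w = m}. p w) = measure M (\<Union>w\<in>{w. length w = m}. cyl w)"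
    by (rule M.finite_measure_finite_Union[symmetric])
      (use cyl_disjoint in \<open>auto simp: disjoint_family_on_def\<close>)
  also have "\<dots> = 1" using M.prob_space by (simp add: UN_cyl_eq_UNIV)
  finally show ?thesis .
qed

lemma ex_cyl_prob_ge: "\<exists>w. length w = m \<and> 1 / real CARD('a) ^ m \<le> p w"
proof (rule ccontr)
  assume "\<not> ?thesis"
  then have "(\<Sum>w\<in>{w. length w = m}. p w) < (\<Sum>w\<in>{w::'a list. length w = m}. 1 / real CARD('a) ^ m)"
    by (intro sum_strict_mono) (auto intro!: exI[of _ "replicate m undefined"])
  then show False by (simp add: sum_cyl_prob card_words)
qed

lemma cyl_sum_ge: "(1 / real CARD('a) ^ m) ^ k \<le> cyl_sum M k m"
proof -
  obtain w where w: "length w = m" "1 / real CARD('a) ^ m \<le> p w" using ex_cyl_prob_ge by blast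
  then have "(1 / real CARD('a) ^ m) ^ k \<le> p w ^ k" by (intro power_mono) auto
  also have "\<dots> \<le> cyl_sum M k m"
    unfolding cyl_sum_def using w by (intro member_le_sum) auto
  finally show ?thesis .
qed

lemma cyl_sum_pos: "0 < cyl_sum M k m"
  by (rule less_le_trans[OF _ cyl_sum_ge]) simp

(* Both mixing hypotheses yield this form: alpha-mixing with beta = 0, psi-mixing with delta = 0. *)
definition cyl_mixing :: "nat \<Rightarrow> nat \<Rightarrow> real \<Rightarrow> real \<Rightarrow> bool" where
  "cyl_mixing m L \<beta> \<delta> \<longleftrightarrow> (\<forall>w w' d. length w = m \<longrightarrow> length w' = m \<longrightarrow> L \<le> d \<longrightarrow>
      measure M (cyl w \<inter> shift_pre d (cyl w')) \<le> p w * p w' * (1 + \<beta>) + \<delta>)"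

definition grid_pair_bound :: "real \<Rightarrow> real \<Rightarrow> nat \<Rightarrow> nat \<Rightarrow> 'a list \<Rightarrow> 'a list \<Rightarrow> real" where
  "grid_pair_bound \<beta> \<delta> a b w w' =
     (if a = b then if w = w' then p w else 0 else p w * p w' * (1 + \<beta>) + \<delta>)"

lemma measure_shift_cyl_Int_le_grid_pair_bound:
  assumes mixing: "cyl_mixing m L \<beta> \<delta>" and len: "length w = m" "length w' = m" and "1 \<le> L"
  shows "measure M (shift_pre (L * a) (cyl w) \<inter> shift_pre (L * b) (cyl w')) \<le> grid_pair_bound \<beta> \<delta> a b w w'"
proof -
  have far: "measure M (shift_pre s (cyl v) \<inter> shift_pre t (cyl v')) \<le> p v * p v' * (1 + \<beta>) + \<delta>"
    if "length v = m" "length v' = m" "s + L \<le> t" for s t v v'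
  proof -
    have "shift_pre s (cyl v) \<inter> shift_pre t (cyl v') = shift_pre s (cyl v \<inter> shift_pre (t - s) (cyl v'))"
      using that(3) by (simp add: shift_pre_Int shift_pre_add)
    then show ?thesis using mixing that by (simp add: cyl_mixing_def measure_shift_pre)
  qed
  consider "a = b" | "a < b" | "b < a" by linarith
  then show ?thesis
  proof cases
    case 1
    show ?thesis
    proof (cases "w = w'")
      case False
      then have "shift_pre (L * a) (cyl w) \<inter> shift_pre (L * a) (cyl w') = {}"
        using cyl_disjoint[of w w'] len by (auto simp: shift_pre_def)
      then show ?thesis using 1 False by (simp add: grid_pair_bound_def)
    qed (use 1 in \<open>simp add: grid_pair_bound_def measure_shift_pre\<close>)
  next
    case 2
    then have "L * a + L \<le> L * b" using \<open>1 \<le> L\<close>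
      by (metis add.commute mult_Suc_right mult_le_mono2 Suc_leI)
    then show ?thesis using far[OF len] 2 by (simp add: grid_pair_bound_def)
  next
    case 3
    then have "L * b + L \<le> L * a" using \<open>1 \<le> L\<close>
      by (metis add.commute mult_Suc_right mult_le_mono2 Suc_leI)
    from far[OF len(2,1) this] 3 show ?thesis by (simp add: grid_pair_bound_def Int_commute mult.commute)
  qed
qed

lemma sum_grid_pair_bound_le:
  assumes "0 \<le> \<beta>" "0 \<le> \<delta>"
  shows "(\<Sum>a<N. \<Sum>b<N. grid_pair_bound \<beta> \<delta> a b w w') \<le>
     real N * (if w = w' then p w else 0) + (real N)^2 * (p w * p w' * (1 + \<beta>) + \<delta>)"
proof -
  define y where "y = p w * p w' * (1 + \<beta>) + \<delta>"
  define c where "c = (if w = w' then p w else 0)"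
  have "0 \<le> y" using assms by (simp add: y_def)
  then have "(\<Sum>a<N. \<Sum>b<N. grid_pair_bound \<beta> \<delta> a b w w') \<le> (\<Sum>a<N. \<Sum>b<N. (if a = b then c else 0) + y)"
    by (intro sum_mono) (auto simp: grid_pair_bound_def c_def y_def)
  also have "\<dots> = real N * c + (real N)^2 * y"
    by (simp add: sum.distrib power2_eq_square algebra_simps)
  finally show ?thesis by (simp add: c_def y_def)
qed

end

locale symbolic_matching = symbolic_dynamics M for M :: "(nat \<Rightarrow> 'a::finite) measure" +
  fixes k :: nat
  assumes two_le_k: "2 \<le> k"
begin

abbreviation Mk :: "(nat \<Rightarrow> nat \<Rightarrow> 'a) measure" where
  "Mk \<equiv> PiM {..<k} (\<lambda>_. M)"

sublocale Mk: finite_product_prob_space "\<lambda>_. M" "{..<k}"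
  by unfold_locales auto

definition word_event :: "(nat \<Rightarrow> nat) \<Rightarrow> 'a list \<Rightarrow> (nat \<Rightarrow> nat \<Rightarrow> 'a) set" where
  "word_event pos w = PiE {..<k} (\<lambda>j. shift_pre (pos j) (cyl w))"

definition match_event :: "(nat \<Rightarrow> nat) \<Rightarrow> nat \<Rightarrow> (nat \<Rightarrow> nat \<Rightarrow> 'a) set" where
  "match_event pos m = (\<Union>w\<in>{w. length w = m}. word_event pos w)"

lemma word_event_sets [measurable]: "word_event pos w \<in> sets Mk"
  unfolding word_event_def by (rule sets_PiM_I_finite) auto

lemma match_event_sets [measurable]: "match_event pos m \<in> sets Mk"
  unfolding match_event_def by (intro sets.finite_UN) auto

lemma measure_word_event: "measure Mk (word_event pos w) = p w ^ k"
  unfolding word_event_def by (simp add: Mk.finite_measure_PiM_emb measure_shift_pre)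

lemma word_event_disjoint:
  assumes "length w = length w'" "w \<noteq> w'"
  shows "word_event pos w \<inter> word_event pos w' = {}"
proof -
  have "shift_pre (pos 0) (cyl w) \<inter> shift_pre (pos 0) (cyl w') = {}"
    using cyl_disjoint[OF assms] by (auto simp: shift_pre_def)
  moreover have "0 < k" using two_le_k by simp
  ultimately show ?thesis unfolding word_event_def by (auto simp: PiE_iff)
qed

lemma measure_match_event: "measure Mk (match_event pos m) = cyl_sum M k m"
proof -
  have "measure Mk (match_event pos m) = (\<Sum>w\<in>{w. length w = m}. measure Mk (word_event pos w))"
    unfolding match_event_def
    by (rule Mk.finite_measure_finite_Union) (use word_event_disjoint in \<open>auto simp: disjoint_family_on_def\<close>)
  then show ?thesis by (simp add: measure_word_event cyl_sum_def)
qed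

lemma mem_match_event_iff:
  assumes "x \<in> space Mk"
  shows "x \<in> match_event pos m \<longleftrightarrow> (\<forall>l<m. \<forall>j<k. \<forall>j'<k. x j (pos j + l) = x j' (pos j' + l))"
proof
  assume "x \<in> match_event pos m"
  then obtain w where w: "length w = m" "x \<in> word_event pos w" unfolding match_event_def by auto
  then have "x j (pos j + l) = w ! l" if "j < k" "l < m" for j l
    using that unfolding word_event_def PiE_iff mem_shift_pre_cyl_iff by auto
  then show "\<forall>l<m. \<forall>j<k. \<forall>j'<k. x j (pos j + l) = x j' (pos j' + l)" by simp
next
  assume match: "\<forall>l<m. \<forall>j<k. \<forall>j'<k. x j (pos j + l) = x j' (pos j' + l)"
  define w where "w = map (\<lambda>l. x 0 (pos 0 + l)) [0..<m]"
  have "x j (pos j + l) = w ! l" if "j < k" "l < m" for j l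
  proof -
    have "0 < k" using two_le_k by simp
    then have "x j (pos j + l) = x 0 (pos 0 + l)" using match that by blast
    then show ?thesis using that by (simp add: w_def)
  qed
  moreover have "length w = m" by (simp add: w_def)
  ultimately have "x j \<in> shift_pre (pos j) (cyl w)" if "j < k" for j
    using that by (simp add: mem_shift_pre_cyl_iff)
  moreover have "x \<in> extensional {..<k}" using assms by (simp add: space_PiM PiE_def)
  ultimately have "x \<in> word_event pos w" unfolding word_event_def by (auto simp: PiE_def)
  then show "x \<in> match_event pos m" unfolding match_event_def using \<open>length w = m\<close> by auto
qed

lemma match_event_if_le_match_len:
  assumes "x \<in> space Mk" "m \<le> match_len k x n"
  shows "x \<in> (\<Union>pos\<in>PiE {..<k} (\<lambda>_. {..n - m}). match_event pos m)"
proof -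
  obtain i where i: "\<forall>j<k. i j + match_len k x n \<le> n"
    "\<forall>l<match_len k x n. \<forall>j<k. \<forall>j'<k. x j (i j + l) = x j' (i j' + l)"
    using match_len_attained by blast
  have "restrict i {..<k} \<in> PiE {..<k} (\<lambda>_. {..n - m})"
    using i(1) assms(2) by auto
  moreover have "x \<in> match_event (restrict i {..<k}) m"
    unfolding mem_match_event_iff[OF assms(1)]
  proof (intro allI impI)
    fix l j j' assume "l < m" "j < k" "j' < k"
    moreover have "l < match_len k x n" using \<open>l < m\<close> assms(2) by linarith
    ultimately have "x j (i j + l) = x j' (i j' + l)" using i(2) by blast
    then show "x j (restrict i {..<k} j + l) = x j' (restrict i {..<k} j' + l)"
      using \<open>j < k\<close> \<open>j' < k\<close> by simp
  qed
  ultimately show ?thesis by blast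
qed

lemma le_match_len_if_match_event:
  assumes "x \<in> space Mk" "x \<in> match_event pos m" "\<forall>j<k. pos j + m \<le> n"
  shows "m \<le> match_len k x n"
proof (rule le_match_len)
  have "pos 0 + m \<le> n" using assms(3) two_le_k by simp
  then show "m \<le> n" by simp
  show "\<forall>j<k. pos j + m \<le> n" by (fact assms(3))
  show "\<forall>l<m. \<forall>j<k. \<forall>j'<k. x j (pos j + l) = x j' (pos j' + l)"
    using assms(2) mem_match_event_iff[OF assms(1)] by blast
qed

end

section \<open>Renyi entropy and the upper bound\<close>

context symbolic_matching
begin

lemma renyi_quotient_le:
  assumes "1 \<le> n"
  shows "ln (cyl_sum M k n) / (- (real k - 1) * real n) \<le> real k * ln (real CARD('a))"
proof -
  define C where "C = real CARD('a)"
  have "C \<ge> 1" by (simp add: C_def)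
  have "- (real k - 1) * real n * (real k * ln C) \<le> - (real k * real n * ln C)"
    using mult_right_mono[of 1 "real k - 1" "real k * real n * ln C"] two_le_k \<open>C \<ge> 1\<close>
    by (simp add: algebra_simps)
  also have "\<dots> = ln ((1 / C ^ n) ^ k)"
    using \<open>C \<ge> 1\<close> by (simp add: ln_realpow ln_div)
  also have "\<dots> \<le> ln (cyl_sum M k n)"
    using cyl_sum_ge[of n k] cyl_sum_pos[of k n] \<open>C \<ge> 1\<close> by (simp add: C_def)
  finally have "exp (- (real k - 1) * real n * (real k * ln C)) \<le> cyl_sum M k n"
    by (rule ln_ge_iff[OF cyl_sum_pos, THEN iffD1])
  moreover have "0 < (real k - 1) * real n" using assms two_le_k by simp
  ultimately show ?thesis
    unfolding C_def by (intro ln_div_neg_le_iff[THEN iffD2]) (simp_all add: cyl_sum_pos)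
qed

lemma renyi_upper_le: "renyi_upper M k \<le> ereal (real k * ln (real CARD('a)))"
  unfolding renyi_upper_def
  by (rule Limsup_bounded) (use renyi_quotient_le in \<open>auto simp: eventually_sequentially\<close>)

lemma renyi_lower_le_upper: "renyi_lower M k \<le> renyi_upper M k"
  unfolding renyi_lower_def renyi_upper_def by (rule Liminf_le_Limsup) simp

lemma eventually_cyl_sum_le:
  assumes "ereal H < renyi_lower M k"
  shows "eventually (\<lambda>m. cyl_sum M k m \<le> exp (- (real k - 1) * real m * H)) sequentially"
proof -
  have "eventually (\<lambda>n. ereal H < ereal (ln (cyl_sum M k n) / (- (real k - 1) * real n))) sequentially"
    using assms unfolding renyi_lower_def by (rule less_LiminfD)
  with eventually_ge_at_top[of 1] show ?thesis
  proof eventually_elim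
    case (elim n)
    have "0 < (real k - 1) * real n" using two_le_k elim by simp
    then show ?case
      using elim by (intro le_ln_div_neg_iff[THEN iffD1]) (simp_all add: cyl_sum_pos)
  qed
qed

lemma eventually_cyl_sum_ge:
  assumes "renyi_upper M k < ereal H"
  shows "eventually (\<lambda>m. exp (- (real k - 1) * real m * H) \<le> cyl_sum M k m) sequentially"
proof -
  have "eventually (\<lambda>n. ereal (ln (cyl_sum M k n) / (- (real k - 1) * real n)) < ereal H) sequentially"
    using assms unfolding renyi_upper_def by (rule Limsup_lessD)
  with eventually_ge_at_top[of 1] show ?thesis
  proof eventually_elim
    case (elim n)
    have "0 < (real k - 1) * real n" using two_le_k elim by simp
    then show ?case
      using elim by (intro ln_div_neg_le_iff[THEN iffD1]) (simp_all add: cyl_sum_pos)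
  qed
qed

lemma measure_match_somewhere_le:
  "measure Mk (\<Union>pos\<in>PiE {..<k} (\<lambda>_. {..n - m}). match_event pos m)
     \<le> real (n - m + 1) ^ k * cyl_sum M k m"
proof -
  have "measure Mk (\<Union>pos\<in>PiE {..<k} (\<lambda>_. {..n - m}). match_event pos m)
        \<le> (\<Sum>pos\<in>PiE {..<k} (\<lambda>_. {..n - m}). measure Mk (match_event pos m))"
    by (rule Mk.finite_measure_subadditive_finite) (auto simp: finite_PiE intro: match_event_sets)
  also have "\<dots> = real (card (PiE {..<k} (\<lambda>_. {..n - m}))) * cyl_sum M k m"
    by (simp add: measure_match_event)
  also have "card (PiE {..<k} (\<lambda>_. {..n - m})) = (n - m + 1) ^ k"
    by (simp add: card_PiE)
  finally show ?thesis by simp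
qed

lemma measure_match_somewhere_dyadic_le:
  assumes "0 < H" and cyl_sum: "cyl_sum M k m \<le> exp (- (real k - 1) * real m * H)"
    and m: "c * (real l * ln 2) \<le> real m"
  shows "measure Mk (\<Union>pos\<in>PiE {..<k} (\<lambda>_. {..2^(l+1) - m}). match_event pos m)
    \<le> 3^k * exp ((real k - c * (real k - 1) * H) * ln 2) ^ l"
proof -
  have "measure Mk (\<Union>pos\<in>PiE {..<k} (\<lambda>_. {..2^(l+1) - m}). match_event pos m)
      \<le> real (2^(l+1) - m + 1) ^ k * cyl_sum M k m"
    by (rule measure_match_somewhere_le)
  also have "\<dots> \<le> (3 * 2^l) ^ k * exp (- (real k - 1) * real m * H)"
  proof -
    have "real (2^(l+1) - m + 1) \<le> 2 * 2^l + 1"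
      using of_nat_le_iff[of "2^(l+1) - m + 1" "2^(l+1) + 1", where 'a=real] by simp
    moreover have "1 \<le> (2::real)^l" by simp
    ultimately have "real (2^(l+1) - m + 1) ^ k \<le> (3 * 2^l) ^ k"
      by (intro power_mono) linarith+
    then show ?thesis using cyl_sum by (rule mult_mono) (simp_all add: less_imp_le[OF cyl_sum_pos])
  qed
  also have "\<dots> \<le> (3 * 2^l) ^ k * exp (- (real k - 1) * (c * (real l * ln 2)) * H)"
  proof (intro mult_left_mono)
    have "((real k - 1) * H) * (c * (real l * ln 2)) \<le> ((real k - 1) * H) * real m"
      using m two_le_k \<open>0 < H\<close> by (intro mult_left_mono) auto
    then show "exp (- (real k - 1) * real m * H) \<le> exp (- (real k - 1) * (c * (real l * ln 2)) * H)"
      by (simp add: algebra_simps)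
  qed simp
  also have "\<dots> = 3^k * exp ((real k - c * (real k - 1) * H) * ln 2) ^ l"
  proof -
    have "(2::real) ^ l = exp (real l * ln 2)" by (simp add: exp_of_nat_mult)
    then have "(3 * 2^l :: real) ^ k = 3^k * exp (real k * (real l * ln 2))"
      by (simp add: power_mult_distrib exp_of_nat_mult power_mult[symmetric] mult.commute)
    moreover have "exp ((real k - c * (real k - 1) * H) * ln 2) ^ l
        = exp (real l * ((real k - c * (real k - 1) * H) * ln 2))"
      by (simp add: exp_of_nat_mult)
    ultimately show ?thesis by (simp add: exp_add[symmetric] algebra_simps)
  qed
  finally show ?thesis .
qed

lemma AE_limsup_match_len_le:
  assumes c: "0 < c" and entropy: "ereal (real k / ((real k - 1) * c)) < renyi_lower M k"
  shows "AE x in Mk. limsup (\<lambda>n. ereal (real (match_len k x n) / ln (real n))) \<le> ereal c"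
proof -
  obtain H where "ereal (real k / ((real k - 1) * c)) < ereal H" "ereal H < renyi_lower M k"
    using ereal_dense2[OF entropy] by blast
  then have H: "real k / ((real k - 1) * c) < H" "ereal H < renyi_lower M k" by simp_all
  have pos: "0 < (real k - 1) * c" using c two_le_k by simp
  then have "real k < H * ((real k - 1) * c)"
    using H(1) pos_divide_less_eq[of "(real k - 1) * c" "real k" H] by simp
  moreover have "0 < real k / ((real k - 1) * c)" using pos two_le_k by simp
  ultimately have "real k < c * (real k - 1) * H" and "0 < H" using H(1) by (simp_all add: mult_ac)
  define \<rho> where "\<rho> = exp ((real k - c * (real k - 1) * H) * ln 2)"
  have \<rho>: "0 \<le> \<rho>" "\<rho> < 1"
    using \<open>real k < c * (real k - 1) * H\<close> by (auto simp: \<rho>_def mult_neg_pos)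
  define m where "m l = nat \<lceil>c * (real l * ln 2)\<rceil>" for l :: nat
  have m_ge: "c * (real l * ln 2) \<le> real (m l)" for l
    unfolding m_def by (rule real_nat_ceiling_ge)
  have m_le: "real (m l) \<le> c * (real l * ln 2) + 1" for l
    using c unfolding m_def by (simp add: of_nat_ceiling)
  define B where "B l = (\<Union>pos\<in>PiE {..<k} (\<lambda>_. {..2^(l+1) - m l}). match_event pos (m l))" for l
  obtain m0 where m0: "\<And>m'. m0 \<le> m' \<Longrightarrow> cyl_sum M k m' \<le> exp (- (real k - 1) * real m' * H)"
    using eventually_cyl_sum_le[OF H(2)] unfolding eventually_sequentially by blast
  have "eventually (\<lambda>l. real m0 \<le> c * (real l * ln 2)) sequentially"
    using c by real_asymp
  then have "eventually (\<lambda>l. measure Mk (B l) \<le> 3^k * \<rho>^l) sequentially"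
  proof eventually_elim
    case (elim l)
    then have "m0 \<le> m l" using m_ge[of l] by linarith
    then show ?case unfolding B_def \<rho>_def
      using m_ge \<open>0 < H\<close> by (intro measure_match_somewhere_dyadic_le m0)
  qed
  moreover have "B l \<in> sets Mk" for l
    unfolding B_def by (intro sets.finite_UN) (simp_all add: finite_PiE match_event_sets)
  ultimately have "AE x in Mk. eventually (\<lambda>l. x \<notin> B l) sequentially"
    using \<rho> by (intro Mk.AE_eventually_not_in_if_geometric)
  then show ?thesis
  proof (rule AE_mp[OF _ AE_I2[OF impI]])
    fix x assume x: "x \<in> space Mk" and "eventually (\<lambda>l. x \<notin> B l) sequentially"
    from this(2) have "eventually (\<lambda>l. real (match_len k x (2^(l+1))) \<le> c * (real l * ln 2) + 1) sequentially"
    proof eventually_elim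
      case (elim l)
      then have "match_len k x (2^(l+1)) < m l"
        using match_event_if_le_match_len[OF x] unfolding B_def by (meson not_le)
      then show ?case using m_le[of l] by linarith
    qed
    then show "limsup (\<lambda>n. ereal (real (match_len k x n) / ln (real n))) \<le> ereal c"
      using c by (intro limsup_le_of_dyadic_bound mono_match_len) auto
  qed
qed

end

section \<open>The second moment estimate\<close>

lemma pair_term_power_le:
  fixes p p' \<beta> \<delta> :: real
  assumes "0 \<le> p" "p \<le> 1" "0 \<le> p'" "p' \<le> 1" "0 \<le> \<beta>" "\<beta> \<le> 1" "0 \<le> \<delta>" "\<delta> \<le> 1"
  shows "(p * p' * (1 + \<beta>) + \<delta>)^k \<le> (p^k * p'^k) * (1 + \<beta>)^k + real k * \<delta> * 3^(k - 1)"
proof -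
  define v where "v = p * p' * (1 + \<beta>)"
  have "0 \<le> v" using assms by (simp add: v_def)
  have "v \<le> 1 * 2" unfolding v_def using assms by (intro mult_mono mult_le_one) auto
  have "(p * p' * (1 + \<beta>) + \<delta>)^k = (\<delta> + v)^k" by (simp add: v_def add.commute)
  also have "\<dots> \<le> v^k + real k * \<delta> * (\<delta> + v)^(k - 1)"
    by (rule power_add_le_mean_value) (use assms \<open>0 \<le> v\<close> in auto)
  also have "(\<delta> + v)^(k - 1) \<le> 3^(k - 1)"
    using assms \<open>0 \<le> v\<close> \<open>v \<le> 1 * 2\<close> by (intro power_mono) auto
  then have "real k * \<delta> * (\<delta> + v)^(k - 1) \<le> real k * \<delta> * 3^(k - 1)"
    using assms by (intro mult_left_mono) auto
  finally show ?thesis by (simp add: v_def power_mult_distrib)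
qed

lemma diagonal_term_le:
  fixes p N \<beta> \<delta> :: real
  assumes p: "0 \<le> p" and N: "0 \<le> N" and \<beta>: "0 \<le> \<beta>" "\<beta> \<le> 1" and \<delta>: "0 \<le> \<delta>" "\<delta> \<le> 1"
    and k: "2 \<le> k"
  shows "real k * N * p * (N * p + N^2 * (p * p * (1 + \<beta>) + \<delta>))^(k - 1)
    \<le> real k * 3^(k - 1) * (N^k * p^k + 2^(k - 1) * N^(2 * k - 1) * p^(2 * k - 1) + N^(2 * k - 1) * p * \<delta>)"
proof -
  obtain k' where k': "k = Suc k'" "1 \<le> k'" using k by (cases k) auto
  define A where "A = N * p"
  define B where "B = N^2 * (2 * p^2)"
  define C where "C = N^2 * \<delta>"
  have ABC: "0 \<le> A" "0 \<le> B" "0 \<le> C" using p N \<delta> by (auto simp: A_def B_def C_def)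
  have "p * p * (1 + \<beta>) \<le> p * p * 2" using p \<beta> by (intro mult_left_mono) auto
  then have "N * p + N^2 * (p * p * (1 + \<beta>) + \<delta>) \<le> A + B + C"
    using N unfolding A_def B_def C_def by (simp add: power2_eq_square distrib_left[symmetric] mult_left_mono)
  moreover have "0 \<le> N * p + N^2 * (p * p * (1 + \<beta>) + \<delta>)" using p N \<beta> \<delta> by simp
  ultimately have "(N * p + N^2 * (p * p * (1 + \<beta>) + \<delta>))^(k - 1) \<le> (A + B + C)^(k - 1)"
    by (intro power_mono)
  also have "\<dots> \<le> 3^(k - 1) * (A^(k - 1) + B^(k - 1) + C^(k - 1))"
    using ABC by (rule power_sum3_le)
  finally have "real k * N * p * (N * p + N^2 * (p * p * (1 + \<beta>) + \<delta>))^(k - 1)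
      \<le> real k * N * p * (3^(k - 1) * (A^(k - 1) + B^(k - 1) + C^(k - 1)))"
    using p N by (intro mult_left_mono) auto
  also have "\<dots> = real k * 3^(k - 1) * (N * p * A^k' + N * p * B^k' + N * p * C^k')"
    using k' by (simp add: algebra_simps)
  also have "N * p * A^k' = N^k * p^k" using k' by (simp add: A_def power_mult_distrib)
  also have "N * p * B^k' = 2^(k - 1) * N^(2 * k - 1) * p^(2 * k - 1)"
    using k' by (simp add: B_def power_mult_distrib power_mult[symmetric] algebra_simps)
  also have "N * p * C^k' \<le> N^(2 * k - 1) * p * \<delta>"
  proof -
    have "\<delta>^k' \<le> \<delta>" using \<delta> k'(2) by (simp add: power_le_one_iff power_decreasing[of 1 k' \<delta>, simplified])
    then have "N * p * N^(2 * k') * \<delta>^k' \<le> N * p * N^(2 * k') * \<delta>" using p N by (intro mult_left_mono) auto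
    then show ?thesis using k' by (simp add: C_def power_mult_distrib power_mult[symmetric] algebra_simps)
  qed
  finally show ?thesis by (simp add: mult_left_mono)
qed

lemma sum_power_double_pred_le:
  fixes p :: "'w \<Rightarrow> real"
  assumes "finite W" "\<And>w. w \<in> W \<Longrightarrow> 0 \<le> p w" "2 \<le> k"
  shows "(\<Sum>w\<in>W. p w^(2 * k - 1)) \<le> (\<Sum>w\<in>W. p w^k) * (\<Sum>w\<in>W. p w^k) powr ((real k - 1) / real k)"
proof -
  define cs where "cs = (\<Sum>w\<in>W. p w^k)"
  have "2 * k - 1 = k + (k - 1)" using assms(3) by simp
  then have "(\<Sum>w\<in>W. p w^(2 * k - 1)) = (\<Sum>w\<in>W. p w^k * p w^(k - 1))"
    by (simp add: power_add)
  also have "\<dots> \<le> (\<Sum>w\<in>W. p w^k * cs powr ((real k - 1) / real k))"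
  proof (rule sum_mono)
    fix w assume w: "w \<in> W"
    have "p w^k \<le> cs" unfolding cs_def using assms w by (intro member_le_sum) auto
    then have "(p w^k) powr ((real k - 1) / real k) \<le> cs powr ((real k - 1) / real k)"
      using assms(2)[OF w] assms(3) by (intro powr_mono2) auto
    then have "p w^(k - 1) \<le> cs powr ((real k - 1) / real k)"
      using power_pred_eq_powr[OF assms(2)[OF w] assms(3)] by simp
    then show "p w^k * p w^(k - 1) \<le> p w^k * cs powr ((real k - 1) / real k)"
      using assms(2)[OF w] by (intro mult_left_mono) auto
  qed
  also have "\<dots> = cs * cs powr ((real k - 1) / real k)" by (simp add: cs_def sum_distrib_right)
  finally show ?thesis by (simp add: cs_def)
qed

lemma sum_pair_power_split_le:
  fixes p :: "'w \<Rightarrow> real" and y :: "'w \<Rightarrow> 'w \<Rightarrow> real" and N :: real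
  assumes W: "finite W" and p: "\<And>w. w \<in> W \<Longrightarrow> 0 \<le> p w"
    and y: "\<And>w w'. w \<in> W \<Longrightarrow> w' \<in> W \<Longrightarrow> 0 \<le> y w w'" and N: "0 \<le> N"
  shows "(\<Sum>w\<in>W. \<Sum>w'\<in>W. (N * (if w = w' then p w else 0) + N^2 * y w w')^k)
    \<le> (\<Sum>w\<in>W. \<Sum>w'\<in>W. (N^2 * y w w')^k) + (\<Sum>w\<in>W. real k * N * p w * (N * p w + N^2 * y w w)^(k - 1))"
proof -
  define u where "u w w' = N * (if w = w' then p w else 0)" for w w'
  have "(\<Sum>w\<in>W. \<Sum>w'\<in>W. (u w w' + N^2 * y w w')^k)
      \<le> (\<Sum>w\<in>W. \<Sum>w'\<in>W. (N^2 * y w w')^k + real k * u w w' * (u w w' + N^2 * y w w')^(k - 1))"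
    using p y N by (intro sum_mono power_add_le_mean_value) (auto simp: u_def)
  also have "\<dots> = (\<Sum>w\<in>W. \<Sum>w'\<in>W. (N^2 * y w w')^k)
      + (\<Sum>w\<in>W. \<Sum>w'\<in>W. real k * u w w' * (u w w' + N^2 * y w w')^(k - 1))"
    by (simp add: sum.distrib)
  also have "(\<Sum>w\<in>W. \<Sum>w'\<in>W. real k * u w w' * (u w w' + N^2 * y w w')^(k - 1))
      = (\<Sum>w\<in>W. real k * N * p w * (N * p w + N^2 * y w w)^(k - 1))"
  proof (rule sum.cong[OF refl])
    fix w assume "w \<in> W"
    have "(\<Sum>w'\<in>W. real k * u w w' * (u w w' + N^2 * y w w')^(k - 1))
        = (\<Sum>w'\<in>W. if w = w' then real k * N * p w * (N * p w + N^2 * y w w)^(k - 1) else 0)"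
      by (rule sum.cong) (auto simp: u_def)
    then show "(\<Sum>w'\<in>W. real k * u w w' * (u w w' + N^2 * y w w')^(k - 1))
        = real k * N * p w * (N * p w + N^2 * y w w)^(k - 1)"
      using W \<open>w \<in> W\<close> by simp
  qed
  finally show ?thesis unfolding u_def .
qed

lemma second_moment_sum_le:
  fixes W :: "'w set" and p :: "'w \<Rightarrow> real" and N \<beta> \<delta> :: real
  assumes W: "finite W" and p: "\<And>w. w \<in> W \<Longrightarrow> 0 \<le> p w \<and> p w \<le> 1" and sum_p: "(\<Sum>w\<in>W. p w) = 1"
    and N: "1 \<le> N" and \<beta>: "0 \<le> \<beta>" "\<beta> \<le> 1" and \<delta>: "0 \<le> \<delta>" "\<delta> \<le> 1" and k: "2 \<le> k"
  defines "cs \<equiv> \<Sum>w\<in>W. p w ^ k" and "K \<equiv> real k * 6^k"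
  shows "(\<Sum>w\<in>W. \<Sum>w'\<in>W. (N * (if w = w' then p w else 0) + N^2 * (p w * p w' * (1 + \<beta>) + \<delta>))^k)
          - (N^k * cs)^2
         \<le> (N^k * cs)^2 * ((1 + \<beta>)^k - 1) + K * \<delta> * (real (card W)^2 + 1) * (N^k)^2 + K * N^k * cs
           + K * N^(2 * k - 1) * cs * cs powr ((real k - 1) / real k)"
proof -
  define y where "y w w' = p w * p w' * (1 + \<beta>) + \<delta>" for w w'
  define u where "u w w' = N * (if w = w' then p w else 0)" for w w'
  define r where "r = (real k - 1) / real k"
  have N0: "0 \<le> N" using N by simp
  have cs0: "0 \<le> cs" unfolding cs_def using p by (auto intro: sum_nonneg)
  have split: "(\<Sum>w\<in>W. \<Sum>w'\<in>W. (u w w' + N^2 * y w w')^k)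
      \<le> (\<Sum>w\<in>W. \<Sum>w'\<in>W. (N^2 * y w w')^k) + (\<Sum>w\<in>W. real k * N * p w * (N * p w + N^2 * y w w)^(k - 1))"
    unfolding u_def using W p N0 \<beta> \<delta> by (intro sum_pair_power_split_le) (auto simp: y_def)
  have off_diagonal: "(\<Sum>w\<in>W. \<Sum>w'\<in>W. (N^2 * y w w')^k)
      \<le> (N^k)^2 * ((1 + \<beta>)^k * cs^2 + real k * \<delta> * 3^(k - 1) * real (card W)^2)"
  proof -
    have "(\<Sum>w\<in>W. \<Sum>w'\<in>W. (N^2 * y w w')^k) = (N^k)^2 * (\<Sum>w\<in>W. \<Sum>w'\<in>W. y w w' ^ k)"
      by (simp add: power_mult_distrib sum_distrib_left power_mult[symmetric] mult.commute)
    also have "(\<Sum>w\<in>W. \<Sum>w'\<in>W. y w w' ^ k)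
        \<le> (\<Sum>w\<in>W. \<Sum>w'\<in>W. (p w ^ k * p w' ^ k) * (1 + \<beta>)^k + real k * \<delta> * 3^(k - 1))"
      unfolding y_def using p \<beta> \<delta> by (intro sum_mono pair_term_power_le) auto
    also have "\<dots> = (1 + \<beta>)^k * cs^2 + real k * \<delta> * 3^(k - 1) * real (card W)^2"
      unfolding cs_def
      by (simp add: sum.distrib sum_distrib_left sum_distrib_right power2_eq_square sum_product algebra_simps)
    finally show ?thesis using N0 by (simp add: mult_left_mono)
  qed
  have diagonal: "(\<Sum>w\<in>W. real k * N * p w * (N * p w + N^2 * y w w)^(k - 1))
      \<le> real k * 3^(k - 1) * (N^k * cs + 2^(k - 1) * N^(2 * k - 1) * (cs * cs powr r) + N^(2 * k - 1) * \<delta>)"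
  proof -
    have "(\<Sum>w\<in>W. real k * N * p w * (N * p w + N^2 * y w w)^(k - 1))
        \<le> (\<Sum>w\<in>W. real k * 3^(k - 1) * (N^k * p w^k + 2^(k - 1) * N^(2 * k - 1) * p w^(2 * k - 1)
              + N^(2 * k - 1) * p w * \<delta>))"
      unfolding y_def using p N0 \<beta> \<delta> k by (intro sum_mono diagonal_term_le) auto
    also have "\<dots> = real k * 3^(k - 1) * (N^k * cs + 2^(k - 1) * N^(2 * k - 1) * (\<Sum>w\<in>W. p w^(2 * k - 1))
        + N^(2 * k - 1) * \<delta> * (\<Sum>w\<in>W. p w))"
      unfolding cs_def by (simp add: sum.distrib sum_distrib_left sum_distrib_right algebra_simps)
    also have "\<dots> \<le> real k * 3^(k - 1) * (N^k * cs + 2^(k - 1) * N^(2 * k - 1) * (cs * cs powr r) + N^(2 * k - 1) * \<delta>)"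
      using sum_power_double_pred_le[of W p k] W p k N0 unfolding sum_p cs_def r_def
      by (intro mult_left_mono add_mono) auto
    finally show ?thesis .
  qed
  have K3: "real k * 3^(k - 1) \<le> K" and K6: "real k * 3^(k - 1) * 2^(k - 1) \<le> K"
  proof -
    have "(3::real)^(k - 1) * 2^(k - 1) = 6^(k - 1)" by (simp flip: power_mult_distrib)
    moreover have "(6::real)^(k - 1) \<le> 6^k" by (intro power_increasing) auto
    moreover have "(3::real)^(k - 1) \<le> 3^(k - 1) * 2^(k - 1)" by simp
    ultimately have "(3::real)^(k - 1) \<le> 6^k" "(3::real)^(k - 1) * 2^(k - 1) \<le> 6^k" by linarith+
    then show "real k * 3^(k - 1) \<le> K" "real k * 3^(k - 1) * 2^(k - 1) \<le> K"
      unfolding K_def by (auto simp: mult.assoc intro!: mult_left_mono)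
  qed
  have "N^(2 * k - 1) \<le> (N^k)^2"
    using N by (simp add: power_mult[symmetric] mult.commute power_increasing)
  then have "N^(2 * k - 1) * \<delta> \<le> (N^k)^2 * \<delta>" using \<delta>(1) by (rule mult_right_mono)
  then have "real k * 3^(k - 1) * (N^(2 * k - 1) * \<delta>) \<le> K * ((N^k)^2 * \<delta>)"
    by (rule mult_mono[OF K3]) (simp_all add: K_def N0 \<delta>(1))
  moreover have "(N^k)^2 * (real k * \<delta> * 3^(k - 1) * real (card W)^2) \<le> K * (\<delta> * real (card W)^2 * (N^k)^2)"
  proof -
    have "(N^k)^2 * (real k * \<delta> * 3^(k - 1) * real (card W)^2)
        = real k * 3^(k - 1) * (\<delta> * real (card W)^2 * (N^k)^2)"
      by (simp add: algebra_simps)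
    then show ?thesis
      using K3 \<delta> by (metis mult_right_mono zero_le_mult_iff zero_le_power2 zero_le_power_eq_numeral)
  qed
  moreover have "real k * 3^(k - 1) * (N^k * cs) \<le> K * (N^k * cs)"
    using K3 N0 cs0 by (intro mult_right_mono) auto
  moreover have "real k * 3^(k - 1) * (2^(k - 1) * N^(2 * k - 1) * (cs * cs powr r)) \<le> K * (N^(2 * k - 1) * (cs * cs powr r))"
    using K6 N0 cs0 by (simp add: mult.assoc[symmetric] mult_right_mono)
  ultimately show ?thesis
    using split off_diagonal diagonal unfolding u_def y_def r_def
    by (simp add: algebra_simps power_mult_distrib)
qed

context symbolic_matching
begin

lemma measure_match_event_Int_le:
  "measure Mk (match_event pos m \<inter> match_event pos' m) \<le>
    (\<Sum>w\<in>{w. length w = m}. \<Sum>w'\<in>{w. length w = m}.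
       \<Prod>j<k. measure M (shift_pre (pos j) (cyl w) \<inter> shift_pre (pos' j) (cyl w')))"
proof -
  let ?W = "{w::'a list. length w = m}"
  have "match_event pos m \<inter> match_event pos' m = (\<Union>ww\<in>?W \<times> ?W. word_event pos (fst ww) \<inter> word_event pos' (snd ww))"
    unfolding match_event_def by auto
  then have "measure Mk (match_event pos m \<inter> match_event pos' m)
      \<le> (\<Sum>ww\<in>?W \<times> ?W. measure Mk (word_event pos (fst ww) \<inter> word_event pos' (snd ww)))"
    by (simp only:) (rule Mk.finite_measure_subadditive_finite, auto intro: word_event_sets)
  also have "\<dots> = (\<Sum>ww\<in>?W \<times> ?W. \<Prod>j<k. measure M (shift_pre (pos j) (cyl (fst ww)) \<inter> shift_pre (pos' j) (cyl (snd ww))))"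
    unfolding word_event_def PiE_Int by (intro sum.cong refl) (auto simp: Mk.finite_measure_PiM_emb)
  finally show ?thesis by (simp add: sum.cartesian_product case_prod_beta)
qed

lemma prob_no_grid_match_le:
  assumes mixing: "cyl_mixing m L \<beta> \<delta>" and "1 \<le> L"
    and \<beta>: "0 \<le> \<beta>" "\<beta> \<le> 1" and \<delta>: "0 \<le> \<delta>" "\<delta> \<le> 1" and N: "1 \<le> N"
  defines "cs \<equiv> cyl_sum M k m" and "K \<equiv> real k * 6^k"
  shows "measure Mk (space Mk - (\<Union>t\<in>PiE {..<k} (\<lambda>_. {..<N}). match_event (\<lambda>j. L * t j) m))
    \<le> ((1 + \<beta>)^k - 1) + (K * \<delta> * (real (CARD('a) ^ m)^2 + 1) * (real N^k)^2 + K * real N^k * cs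
        + K * real N^(2 * k - 1) * cs * cs powr ((real k - 1) / real k)) / (real N^k * cs)^2"
proof -
  define T where "T = PiE {..<k} (\<lambda>_. {..<N})"
  define W where "W = {w::'a list. length w = m}"
  define \<mu> where "\<mu> = real N^k * cs"
  have "finite T" by (simp add: T_def finite_PiE)
  have \<mu>: "\<mu> = (\<Sum>t\<in>T. measure Mk (match_event (\<lambda>j. L * t j) m))"
    by (simp add: measure_match_event T_def card_PiE \<mu>_def cs_def)
  have "0 < \<mu>" unfolding \<mu>_def cs_def using cyl_sum_pos N by simp
  have second_moment: "measure Mk (space Mk - (\<Union>t\<in>T. match_event (\<lambda>j. L * t j) m)) \<le>
     ((\<Sum>t\<in>T. \<Sum>t'\<in>T. measure Mk (match_event (\<lambda>j. L * t j) m \<inter> match_event (\<lambda>j. L * t' j) m)) - \<mu>^2) / \<mu>^2"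
    by (rule Mk.prob_not_Union_le_second_moment[OF \<open>finite T\<close> match_event_sets \<mu> \<open>0 < \<mu>\<close>])
  define Z where "Z = (\<Sum>w\<in>W. \<Sum>w'\<in>W.
    (real N * (if w = w' then p w else 0) + (real N)^2 * (p w * p w' * (1 + \<beta>) + \<delta>))^k)"
  have "(\<Sum>t\<in>T. \<Sum>t'\<in>T. measure Mk (match_event (\<lambda>j. L * t j) m \<inter> match_event (\<lambda>j. L * t' j) m))
     \<le> (\<Sum>t\<in>T. \<Sum>t'\<in>T. \<Sum>w\<in>W. \<Sum>w'\<in>W. \<Prod>j<k. grid_pair_bound \<beta> \<delta> (t j) (t' j) w w')"
    unfolding W_def
    by (intro sum_mono order.trans[OF measure_match_event_Int_le] prod_mono conjI
        measure_shift_cyl_Int_le_grid_pair_bound[OF mixing _ _ \<open>1 \<le> L\<close>]) auto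
  also have "\<dots> = (\<Sum>w\<in>W. \<Sum>w'\<in>W. \<Sum>t\<in>T. \<Sum>t'\<in>T. \<Prod>j<k. grid_pair_bound \<beta> \<delta> (t j) (t' j) w w')"
    by (rule sum_swap_pairs)
  also have "\<dots> = (\<Sum>w\<in>W. \<Sum>w'\<in>W. (\<Sum>a<N. \<Sum>b<N. grid_pair_bound \<beta> \<delta> a b w w')^k)"
  proof (intro sum.cong[OF refl])
    fix w w'
    show "(\<Sum>t\<in>T. \<Sum>t'\<in>T. \<Prod>j<k. grid_pair_bound \<beta> \<delta> (t j) (t' j) w w')
        = (\<Sum>a<N. \<Sum>b<N. grid_pair_bound \<beta> \<delta> a b w w')^k"
      unfolding T_def using sum_PiE_prod_pairs[of "\<lambda>a b. grid_pair_bound \<beta> \<delta> a b w w'" k N] by simp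
  qed
  also have "\<dots> \<le> Z"
    unfolding Z_def using \<beta> \<delta>
    by (intro sum_mono power_mono sum_grid_pair_bound_le sum_nonneg) (auto simp: grid_pair_bound_def)
  finally have pairs: "(\<Sum>t\<in>T. \<Sum>t'\<in>T. measure Mk (match_event (\<lambda>j. L * t j) m \<inter> match_event (\<lambda>j. L * t' j) m)) \<le> Z" .
  define R where "R = K * \<delta> * (real (card W)^2 + 1) * (real N^k)^2 + K * real N^k * cs
    + K * real N^(2 * k - 1) * cs * cs powr ((real k - 1) / real k)"
  have "Z - \<mu>^2 \<le> \<mu>^2 * ((1 + \<beta>)^k - 1) + K * \<delta> * (real (card W)^2 + 1) * (real N^k)^2
      + K * real N^k * cs + K * real N^(2 * k - 1) * cs * cs powr ((real k - 1) / real k)"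
    unfolding Z_def \<mu>_def K_def cs_def cyl_sum_def W_def
    using N \<beta> \<delta> two_le_k by (intro second_moment_sum_le) (auto simp: sum_cyl_prob)
  then have "Z - \<mu>^2 \<le> \<mu>^2 * ((1 + \<beta>)^k - 1) + R" by (simp add: R_def add.assoc)
  with pairs have "(\<Sum>t\<in>T. \<Sum>t'\<in>T. measure Mk (match_event (\<lambda>j. L * t j) m \<inter> match_event (\<lambda>j. L * t' j) m))
      - \<mu>^2 \<le> \<mu>^2 * ((1 + \<beta>)^k - 1) + R" by simp
  then have "measure Mk (space Mk - (\<Union>t\<in>T. match_event (\<lambda>j. L * t j) m))
      \<le> (\<mu>^2 * ((1 + \<beta>)^k - 1) + R) / \<mu>^2"
    using second_moment by (smt (verit) divide_right_mono zero_le_power2)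
  also have "\<dots> = ((1 + \<beta>)^k - 1) + R / \<mu>^2"
    using \<open>0 < \<mu>\<close> by (simp add: add_divide_distrib)
  finally show ?thesis unfolding T_def R_def W_def \<mu>_def card_words .
qed

end

section \<open>The lower bound\<close>

lemma one_plus_power_sub_one_le_powr:
  fixes \<beta> x :: real
  assumes "0 \<le> \<beta>" "\<beta> \<le> 1" "\<beta> \<le> x powr (-b)" "1 \<le> x" "\<gamma> \<le> b"
  shows "(1+\<beta>)^k - 1 \<le> real k * 2^k * x powr (-\<gamma>)"
proof -
  have "(\<beta>+1)^k \<le> 1^k + real k * \<beta> * (\<beta>+1)^(k-1)" by (rule power_add_le_mean_value) (use assms in auto)
  also have "(\<beta>+1)^(k-1) \<le> 2^(k-1)" using assms by (intro power_mono) auto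
  then have "real k * \<beta> * (\<beta>+1)^(k-1) \<le> real k * \<beta> * 2^(k-1)" using assms by (intro mult_left_mono) auto
  finally have a: "(1+\<beta>)^k - 1 \<le> real k * \<beta> * 2^(k-1)" by (simp add: add.commute)
  have "\<beta> \<le> x powr (-\<gamma>)" using assms by (meson order.trans powr_mono neg_le_iff_le)
  moreover have "(2::real)^(k-1) \<le> 2^k" by (intro power_increasing) auto
  ultimately have "real k * \<beta> * 2^(k-1) \<le> real k * x powr (-\<gamma>) * 2^k"
    using assms by (intro mult_mono) auto
  then show ?thesis using a by (simp add: mult_ac)
qed

lemma mixing_error_ratio_le_powr:
  fixes x \<delta> W cs K C q s R Nk \<gamma> :: real
  assumes x: "1 \<le> x" and \<delta>: "0 \<le> \<delta>" "\<delta> \<le> C * x powr (-R)" and R: "R = 2 * q + 2 * s + 1"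
    and W: "0 \<le> W" "W \<le> x powr q" and q: "0 \<le> q" and cs: "x powr (-s) \<le> cs" "0 < cs"
    and K: "0 \<le> K" and C: "0 \<le> C" and Nk: "0 < Nk" and \<gamma>: "\<gamma> \<le> 1"
  shows "K * \<delta> * (W^2 + 1) * Nk^2 / (Nk * cs)^2 \<le> 2 * K * C * x powr (-\<gamma>)"
proof -
  have x0: "0 < x" using x by simp
  have w: "W^2 + 1 \<le> 2 * x powr (2*q)"
  proof -
    have "W^2 \<le> (x powr q)^2" using W by (intro power_mono) auto
    also have "\<dots> = x powr (2*q)" by (simp add: power2_eq_square powr_add[symmetric])
    finally have "W^2 \<le> x powr (2*q)" .
    moreover have "1 \<le> x powr (2*q)" using x q by (simp add: ge_one_powr_ge_zero)
    ultimately show ?thesis by simp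
  qed
  have c: "1 / cs^2 \<le> x powr (2* s)"
  proof -
    have "(x powr (-s))^2 \<le> cs^2" using cs x0 by (intro power_mono) auto
    moreover have "(x powr (-s))^2 = x powr (-(2* s))"
      by (simp add: power2_eq_square powr_add[symmetric])
    ultimately have "x powr (-(2* s)) \<le> cs^2" by simp
    then have "1 / cs^2 \<le> 1 / x powr (-(2* s))" using x0 cs by (intro divide_left_mono) (auto intro!: mult_pos_pos)
    then show ?thesis by (simp add: powr_minus_divide)
  qed
  have "K * \<delta> * (W^2 + 1) * Nk^2 / (Nk * cs)^2 = K * \<delta> * (W^2 + 1) * (1 / cs^2)"
    using Nk cs by (simp add: field_simps power_mult_distrib)
  also have "\<dots> \<le> K * (C * x powr (-R)) * (2 * x powr (2*q)) * x powr (2* s)"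
    using \<delta> w c K C W by (intro mult_mono mult_left_mono) auto
  also have "\<dots> = 2 * K * C * (x powr (-R) * x powr (2*q) * x powr (2* s))" by (simp add: mult_ac)
  also have "x powr (-R) * x powr (2*q) * x powr (2* s) = x powr (-1)"
    by (simp add: powr_add[symmetric] R)
  also have "x powr (-1) \<le> x powr (-\<gamma>)" using x \<gamma> by (intro powr_mono) auto
  then have "2 * K * C * x powr (-1) \<le> 2 * K * C * x powr (-\<gamma>)" using K C by (intro mult_left_mono) auto
  finally show ?thesis .
qed

lemma inverse_mean_ratio_le_powr:
  fixes x cs K N s e \<gamma> :: real
  assumes x: "1 \<le> x" and cs: "x powr (-s) \<le> cs" "0 < cs" and K: "0 \<le> K"
    and N: "x powr (1 - e) / 6 \<le> N" and e: "e < 1" and g: "\<gamma> \<le> real k * (1 - e) - s"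
  shows "K * N^k * cs / (N^k * cs)^2 \<le> K * 6^k * x powr (-\<gamma>)"
proof -
  have x0: "0 < x" using x by simp
  have Np: "0 < x powr (1 - e) / 6" using x0 by simp
  have N0: "0 < N" using Np N by linarith
  have "(x powr (1 - e) / 6)^k \<le> N^k" using Np N by (intro power_mono) auto
  moreover have "(x powr (1 - e) / 6)^k = x powr (real k * (1 - e)) / 6^k"
    using x0 by (simp add: power_divide powr_realpow[symmetric] powr_powr mult.commute)
  ultimately have a: "x powr (real k * (1 - e)) / 6^k \<le> N^k" by simp
  have "x powr (real k * (1 - e)) / 6^k * x powr (-s) \<le> N^k * cs"
    using a cs x0 N0 by (intro mult_mono) auto
  moreover have "x powr (real k * (1 - e)) / 6^k * x powr (-s) = x powr (real k * (1 - e) - s) / 6^k"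
    by (simp add: powr_add[symmetric])
  ultimately have b: "x powr (real k * (1 - e) - s) / 6^k \<le> N^k * cs" by simp
  have "K * N^k * cs / (N^k * cs)^2 = K / (N^k * cs)"
    using N0 cs by (simp add: power2_eq_square field_simps)
  also have "\<dots> \<le> K / (x powr (real k * (1 - e) - s) / 6^k)"
    using b K x0 cs N0 by (intro divide_left_mono) auto
  also have "\<dots> = K * 6^k * x powr (-(real k * (1 - e) - s))"
    by (simp only: powr_minus_divide) simp
  also have "x powr (-(real k * (1 - e) - s)) \<le> x powr (-\<gamma>)" using x g by (intro powr_mono) auto
  then have "K * 6^k * x powr (-(real k * (1 - e) - s)) \<le> K * 6^k * x powr (-\<gamma>)"
    using K by (intro mult_left_mono) auto
  finally show ?thesis .
qed

lemma diagonal_ratio_le_powr: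
  fixes x cs K N s e \<gamma> :: real
  assumes x: "1 \<le> x" and cs: "x powr (-s) \<le> cs" "0 < cs" and K: "0 \<le> K" and k: "1 \<le> k"
    and N: "x powr (1 - e) / 6 \<le> N" and g: "\<gamma> \<le> 1 - e - s / real k" and s: "0 \<le> s"
  shows "K * N^(2*k-1) * cs * cs powr ((real k - 1) / real k) / (N^k * cs)^2 \<le> 6 * K * x powr (-\<gamma>)"
proof -
  have x0: "0 < x" using x by simp
  have Np: "0 < x powr (1 - e) / 6" using x0 by simp
  have N0: "0 < N" using Np N by linarith
  have kk: "2*k-1 + 1 = 2 * k" using k by simp
  have r: "cs powr ((real k - 1) / real k) = cs / cs powr (1 / real k)"
  proof -
    have "(real k - 1) / real k = 1 - 1 / real k" using k by (simp add: field_simps)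
    then show ?thesis using cs by (simp add: powr_diff)
  qed
  have "K * N^(2*k-1) * cs * cs powr ((real k - 1) / real k) / (N^k * cs)^2
        = K * (N^(2*k-1) * N) * cs^2 / (N * (N^k)^2 * cs^2 * cs powr (1 / real k))"
    using N0 cs by (simp add: r power2_eq_square field_simps)
  also have "N^(2*k-1) * N = (N^k)^2" using kk by (metis power_Suc2 Suc_eq_plus1 power_mult mult.commute)
  also have "K * (N^k)^2 * cs^2 / (N * (N^k)^2 * cs^2 * cs powr (1 / real k)) = K / (N * cs powr (1 / real k))"
    using N0 cs by (simp add: field_simps)
  also have "\<dots> \<le> K / (x powr (1 - e) / 6 * x powr (- s / real k))"
  proof (intro divide_left_mono mult_mono K)
    show "x powr (- s / real k) \<le> cs powr (1 / real k)"
    proof -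
      have "(x powr (-s)) powr (1 / real k) \<le> cs powr (1 / real k)" using cs x0 by (intro powr_mono2) auto
      then show ?thesis by (simp add: powr_powr)
    qed
  qed (use N N0 x0 cs in \<open>auto intro!: mult_pos_pos\<close>)
  also have "\<dots> = 6 * K * x powr (-(1 - e - s / real k))"
  proof -
    have eqexp: "(1 - e) + (- s / real k) = 1 - e - s / real k" by simp
    have "x powr (1 - e) * x powr (- s / real k) = x powr ((1 - e) + (- s / real k))"
      by (rule powr_add[symmetric])
    then have "x powr (1 - e) * x powr (- s / real k) = x powr (1 - e - s / real k)"
      by (simp only: eqexp)
    then have "x powr (1 - e) / 6 * x powr (- s / real k) = x powr (1 - e - s / real k) / 6"
      by simp
    then show ?thesis by (simp only: powr_minus_divide) simp
  qed
  also have "x powr (-(1 - e - s / real k)) \<le> x powr (-\<gamma>)" using x g by (intro powr_mono) auto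
  then have "6 * K * x powr (-(1 - e - s / real k)) \<le> 6 * K * x powr (-\<gamma>)"
    using K by (intro mult_left_mono) auto
  finally show ?thesis .
qed

lemma gap_rates_le_powr:
  fixes x :: real and g :: nat
  assumes x: "1 \<le> x" and g: "x powr e \<le> real g" and e: "0 \<le> e" and a: "0 < a"
    and \<theta>: "0 < \<theta>" "\<theta> < 1" and long_gap: "R * ln x \<le> - ln \<theta> * x powr e"
  shows "real g powr (-a) \<le> x powr (-(a * e))" and "\<theta>^g \<le> x powr (-R)"
proof -
  have "0 < x powr e" using x by simp
  then have "real g powr (-a) \<le> (x powr e) powr (-a)" using a g by (intro powr_mono2') auto
  then show "real g powr (-a) \<le> x powr (-(a * e))" by (simp add: powr_powr mult.commute)
  have "\<theta>^g = exp (real g * ln \<theta>)" using \<theta> by (simp add: exp_of_nat_mult)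
  also have "real g * ln \<theta> \<le> x powr e * ln \<theta>" using g \<theta> by (intro mult_right_mono_neg) auto
  also have "x powr e * ln \<theta> \<le> - R * ln x" using long_gap by (simp add: algebra_simps)
  also have "exp (- R * ln x) = x powr (-R)" using x by (simp add: powr_def)
  finally show "\<theta>^g \<le> x powr (-R)" by simp
qed

(* At time n the sequences are only probed at the grid points t * block_len, t < block_count:
   each block is a candidate match of length target_len followed by a gap of length gap_len,
   which decouples distinct grid points under mixing. *)
definition target_len :: "real \<Rightarrow> nat \<Rightarrow> nat" where
  "target_len c n = nat \<lfloor>c * ln (real n)\<rfloor>"

definition gap_len :: "real \<Rightarrow> nat \<Rightarrow> nat" where
  "gap_len e n = nat \<lceil>real n powr e\<rceil>"

definition block_len :: "real \<Rightarrow> real \<Rightarrow> nat \<Rightarrow> nat" where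
  "block_len c e n = target_len c n + gap_len e n"

definition block_count :: "real \<Rightarrow> real \<Rightarrow> nat \<Rightarrow> nat" where
  "block_count c e n = n div block_len c e n"

lemma grid_parameters:
  assumes n: "2 \<le> n" and c: "0 < c" and e: "0 < e"
    and len_le_gap: "c * ln (real n) \<le> real n powr e" and many_blocks: "6 \<le> real n powr (1 - e)"
  shows "real (target_len c n) \<le> c * ln (real n)" and "c * ln (real n) - 1 \<le> real (target_len c n)"
    and "real n powr e \<le> real (gap_len e n)" and "real n powr (1 - e) / 6 \<le> real (block_count c e n)"
proof -
  define x where "x = real n"
  have "0 < x" "0 < ln x" using n by (simp_all add: x_def)
  show m_le: "real (target_len c n) \<le> c * ln (real n)"
    using c n unfolding target_len_def by (intro of_nat_floor) simp
  show "c * ln (real n) - 1 \<le> real (target_len c n)" unfolding target_len_def by linarith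
  show g_ge: "real n powr e \<le> real (gap_len e n)" unfolding gap_len_def by (rule real_nat_ceiling_ge)
  have "real (gap_len e n) \<le> x powr e + 1"
    unfolding gap_len_def x_def using powr_ge_zero[of "real n" e] by linarith
  moreover have "1 \<le> x powr e" using n e by (simp add: x_def ge_one_powr_ge_zero)
  ultimately have L_le: "real (block_len c e n) \<le> 3 * x powr e"
    using m_le len_le_gap unfolding block_len_def x_def by simp
  then have "0 < block_len c e n" using g_ge \<open>1 \<le> x powr e\<close> by (simp add: block_len_def x_def)
  then have "n < block_len c e n + block_count c e n * block_len c e n"
    unfolding block_count_def by (rule dividend_less_div_times)
  then have "real n < real (block_len c e n + block_count c e n * block_len c e n)"
    by (simp only: of_nat_less_iff)
  then have "x < (real (block_count c e n) + 1) * real (block_len c e n)"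
    by (simp add: x_def algebra_simps)
  then have "x / real (block_len c e n) - 1 < real (block_count c e n)"
    using \<open>0 < block_len c e n\<close> by (simp add: field_simps)
  moreover have "x / (3 * x powr e) \<le> x / real (block_len c e n)"
    using L_le \<open>0 < block_len c e n\<close> \<open>0 < x\<close> by (intro divide_left_mono) auto
  moreover have "x / (3 * x powr e) = x powr (1 - e) / 3" using \<open>0 < x\<close> by (simp add: powr_diff)
  ultimately show "real n powr (1 - e) / 6 \<le> real (block_count c e n)"
    using many_blocks unfolding x_def by linarith
qed

context symbolic_matching
begin

definition no_grid_match :: "real \<Rightarrow> real \<Rightarrow> nat \<Rightarrow> (nat \<Rightarrow> nat \<Rightarrow> 'a) set" where
  "no_grid_match c e n = space Mk -
     (\<Union>t\<in>PiE {..<k} (\<lambda>_. {..<block_count c e n}). match_event (\<lambda>j. block_len c e n * t j) (target_len c n))"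

lemma target_len_bounds:
  assumes n: "2 \<le> n" and c: "0 < c" and H: "0 < H"
    and m0: "\<And>m. m \<ge> m0 \<Longrightarrow> exp (- (real k - 1) * real m * H) \<le> cyl_sum M k m"
    and long_target: "real m0 + 1 \<le> c * ln (real n)"
  shows "real n powr (- (c * (real k - 1) * H)) \<le> cyl_sum M k (target_len c n)"
    and "real (CARD('a) ^ target_len c n) \<le> real n powr (c * ln (real CARD('a)))"
proof -
  define x where "x = real n"
  define m where "m = target_len c n"
  have "0 < x" using n by (simp add: x_def)
  have m: "real m \<le> c * ln x" "c * ln x - 1 \<le> real m"
    unfolding m_def x_def using n c by (auto intro: of_nat_floor simp: target_len_def)
  have "(real k - 1) * real m * H \<le> (real k - 1) * (c * ln x) * H"
    using m(1) two_le_k H by (intro mult_right_mono mult_left_mono) auto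
  have "x powr (- (c * (real k - 1) * H)) = exp (- (real k - 1) * (c * ln x) * H)"
    using \<open>0 < x\<close> by (simp add: powr_def algebra_simps)
  also have "\<dots> \<le> exp (- (real k - 1) * real m * H)"
    using \<open>(real k - 1) * real m * H \<le> (real k - 1) * (c * ln x) * H\<close>
    by (simp only: exp_le_cancel_iff mult_minus_left neg_le_iff_le)
  also have "\<dots> \<le> cyl_sum M k m"
    using long_target m(2) unfolding x_def by (intro m0) linarith
  finally show "real n powr (- (c * (real k - 1) * H)) \<le> cyl_sum M k (target_len c n)"
    by (simp add: x_def m_def)
  have "real (CARD('a) ^ m) = exp (real m * ln (real CARD('a)))" by (simp add: exp_of_nat_mult)
  also have "real m * ln (real CARD('a)) \<le> (c * ln x) * ln (real CARD('a))"
    using m(1) by (intro mult_right_mono) auto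
  also have "exp ((c * ln x) * ln (real CARD('a))) = x powr (c * ln (real CARD('a)))"
    using \<open>0 < x\<close> by (simp add: powr_def algebra_simps)
  finally show "real (CARD('a) ^ target_len c n) \<le> real n powr (c * ln (real CARD('a)))"
    by (simp add: x_def m_def)
qed

lemma prob_no_grid_match_le_powr:
  fixes \<beta> \<delta> :: "nat \<Rightarrow> real"
  assumes mixing: "\<forall>m g. 1 \<le> g \<longrightarrow> cyl_mixing m (m + g) (\<beta> g) (\<delta> g)"
    and rates: "\<forall>g\<ge>1. 0 \<le> \<beta> g \<and> \<beta> g \<le> real g powr (-a) \<and> 0 \<le> \<delta> g \<and> \<delta> g \<le> C * \<theta>^g"
    and a: "0 < a" and C: "0 \<le> C" and \<theta>: "0 < \<theta>" "\<theta> < 1" and c: "0 < c"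
    and s: "0 < s" "s < real k" "s = c * (real k - 1) * H" and e: "e = (1 - s / real k) / 2"
    and H: "0 < H"
    and m0: "\<And>m. m \<ge> m0 \<Longrightarrow> exp (- (real k - 1) * real m * H) \<le> cyl_sum M k m"
    and q: "q = c * ln (real CARD('a))" and R: "R = 2 * q + 2 * s + 1"
    and \<gamma>: "\<gamma> = min (a * e) e"
    and n: "2 \<le> n"
    and long_target: "real m0 + 1 \<le> c * ln (real n)"
    and len_le_gap: "c * ln (real n) \<le> real n powr e"
    and many_blocks: "6 \<le> real n powr (1 - e)"
    and long_gap: "R * ln (real n) \<le> - ln \<theta> * real n powr e"
    and large_n: "C \<le> real n powr R"
  shows "measure Mk (no_grid_match c e n) \<le>
     (real k * 2^k + 2 * (real k * 6^k) * C + (real k * 6^k) * 6^k + 6 * (real k * 6^k)) * real n powr (-\<gamma>)"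
proof -
  define x where "x = real n"
  have x: "1 \<le> x" "0 < x" using n by (auto simp: x_def)
  have sk: "0 < s / real k" "s / real k < 1" using s by (auto simp: divide_less_eq)
  have e0: "0 < e" unfolding e using sk by simp
  have e1: "e < 1/2" unfolding e using sk s(1) two_le_k by simp
  define m where "m = target_len c n"
  define g where "g = gap_len e n"
  define L where "L = block_len c e n"
  define N where "N = block_count c e n"
  define cs where "cs = cyl_sum M k m"
  define K where "K = real k * 6^k"
  note grid = grid_parameters[OF n c e0 len_le_gap many_blocks, folded x_def m_def g_def N_def]
  have "1 \<le> x powr e" using x e0 by (simp add: ge_one_powr_ge_zero)
  then have "1 \<le> g" using grid(3) by linarith
  have N_ge: "x powr (1 - e) / 6 \<le> real N" by (fact grid(4))
  then have "1 \<le> N" using many_blocks unfolding x_def by linarith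
  have "L = m + g" by (simp add: L_def block_len_def m_def g_def)
  then have "1 \<le> L" using \<open>1 \<le> g\<close> by simp
  have \<beta>: "0 \<le> \<beta> g" "\<beta> g \<le> real g powr (-a)" and \<delta>: "0 \<le> \<delta> g" "\<delta> g \<le> C * \<theta>^g"
    using rates \<open>1 \<le> g\<close> by auto
  note gap_rates = gap_rates_le_powr[OF x(1) grid(3) less_imp_le[OF e0] a \<theta> long_gap[folded x_def]]
  have \<beta>_le: "\<beta> g \<le> x powr (-(a * e))" using \<beta> gap_rates(1) by linarith
  have "real g powr (-a) \<le> real g powr 0" using \<open>1 \<le> g\<close> a by (intro powr_mono) auto
  then have "\<beta> g \<le> 1" using \<beta> \<open>1 \<le> g\<close> by simp
  have \<delta>_le: "\<delta> g \<le> C * x powr (-R)" using \<delta> gap_rates(2) C by (meson order.trans mult_left_mono)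
  have "C * x powr (-R) \<le> x powr R * x powr (-R)" using large_n unfolding x_def by (intro mult_right_mono) auto
  then have "\<delta> g \<le> 1" using \<delta>_le x by (simp add: powr_add[symmetric])
  have cs_ge: "x powr (-s) \<le> cs" and words: "real (CARD('a) ^ m) \<le> x powr q"
    using target_len_bounds[OF n c H m0 long_target] by (simp_all add: x_def m_def cs_def s(3) q)
  have "0 < cs" unfolding cs_def by (rule cyl_sum_pos)
  have "0 \<le> q" using q c by simp
  have "cyl_mixing m L (\<beta> g) (\<delta> g)" using mixing \<open>1 \<le> g\<close> \<open>L = m + g\<close> by auto
  then have "measure Mk (no_grid_match c e n) \<le> ((1 + \<beta> g)^k - 1)
     + (K * \<delta> g * (real (CARD('a) ^ m)^2 + 1) * (real N^k)^2 + K * real N^k * cs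
        + K * real N^(2 * k - 1) * cs * cs powr ((real k - 1) / real k)) / (real N^k * cs)^2"
    unfolding K_def cs_def no_grid_match_def L_def[symmetric] N_def[symmetric] m_def[symmetric]
    using \<open>1 \<le> L\<close> \<beta>(1) \<open>\<beta> g \<le> 1\<close> \<delta>(1) \<open>\<delta> g \<le> 1\<close> \<open>1 \<le> N\<close> by (rule prob_no_grid_match_le)
  also have "\<dots> = ((1 + \<beta> g)^k - 1) + K * \<delta> g * (real (CARD('a) ^ m)^2 + 1) * (real N^k)^2 / (real N^k * cs)^2
      + K * real N^k * cs / (real N^k * cs)^2
      + K * real N^(2 * k - 1) * cs * cs powr ((real k - 1) / real k) / (real N^k * cs)^2"
    by (simp add: add_divide_distrib)
  also have "\<dots> \<le> real k * 2^k * x powr (-\<gamma>) + 2 * K * C * x powr (-\<gamma>) + K * 6^k * x powr (-\<gamma>)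
      + 6 * K * x powr (-\<gamma>)"
  proof (intro add_mono)
    have "\<gamma> \<le> e" "\<gamma> \<le> a * e" using \<gamma> by auto
    show "(1 + \<beta> g)^k - 1 \<le> real k * 2^k * x powr (-\<gamma>)"
      using \<beta>(1) \<open>\<beta> g \<le> 1\<close> \<beta>_le x(1) \<open>\<gamma> \<le> a * e\<close> by (rule one_plus_power_sub_one_le_powr)
    show "K * \<delta> g * (real (CARD('a) ^ m)^2 + 1) * (real N^k)^2 / (real N^k * cs)^2 \<le> 2 * K * C * x powr (-\<gamma>)"
      using \<open>\<gamma> \<le> e\<close> e1 \<open>1 \<le> N\<close>
      by (intro mixing_error_ratio_le_powr[OF x(1) \<delta>(1) \<delta>_le R _ words \<open>0 \<le> q\<close> cs_ge \<open>0 < cs\<close> _ C])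
        (auto simp: K_def)
    have "real k * (1 - e) - s = real k * e" using two_le_k unfolding e by (simp add: field_simps)
    moreover have "e \<le> real k * e" using two_le_k e0 by (simp add: mult_le_cancel_right1)
    ultimately show "K * real N^k * cs / (real N^k * cs)^2 \<le> K * 6^k * x powr (-\<gamma>)"
      using \<open>\<gamma> \<le> e\<close> e1
      by (intro inverse_mean_ratio_le_powr[OF x(1) cs_ge \<open>0 < cs\<close> _ N_ge]) (auto simp: K_def)
    have "1 - e - s / real k = e" unfolding e by (simp add: field_simps)
    then show "K * real N^(2 * k - 1) * cs * cs powr ((real k - 1) / real k) / (real N^k * cs)^2
        \<le> 6 * K * x powr (-\<gamma>)"
      using \<open>\<gamma> \<le> e\<close> two_le_k s(1)
      by (intro diagonal_ratio_le_powr[OF x(1) cs_ge \<open>0 < cs\<close> _ _ N_ge]) (auto simp: K_def)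
  qed
  finally show ?thesis by (simp add: K_def x_def algebra_simps)
qed

lemma no_grid_match_sets [measurable]: "no_grid_match c e n \<in> sets Mk"
  unfolding no_grid_match_def by (intro sets.Diff sets.top sets.finite_UN) (auto simp: finite_PiE)

lemma target_len_le_match_len:
  assumes "x \<in> space Mk" "x \<notin> no_grid_match c e n"
  shows "target_len c n \<le> match_len k x n"
proof -
  obtain t where t: "t \<in> PiE {..<k} (\<lambda>_. {..<block_count c e n})"
    "x \<in> match_event (\<lambda>j. block_len c e n * t j) (target_len c n)"
    using assms unfolding no_grid_match_def by auto
  have "block_len c e n * t j + target_len c n \<le> n" if "j < k" for j
  proof -
    have "t j < block_count c e n" using PiE_mem[OF t(1)] that by simp
    then have "t j + 1 \<le> n div block_len c e n" by (simp add: block_count_def)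
    then have "block_len c e n * (t j + 1) \<le> n"
      by (metis div_times_less_eq_dividend mult.commute mult_le_mono2 order_trans)
    moreover have "target_len c n \<le> block_len c e n" by (simp add: block_len_def)
    ultimately show ?thesis by (simp add: algebra_simps)
  qed
  then show ?thesis using le_match_len_if_match_event[OF assms(1) t(2)] by blast
qed

lemma eventually_prob_no_grid_match_le:
  fixes \<beta> \<delta> :: "nat \<Rightarrow> real"
  assumes mixing: "\<forall>m g. 1 \<le> g \<longrightarrow> cyl_mixing m (m + g) (\<beta> g) (\<delta> g)"
    and rates: "\<forall>g\<ge>1. 0 \<le> \<beta> g \<and> \<beta> g \<le> real g powr (-a) \<and> 0 \<le> \<delta> g \<and> \<delta> g \<le> C * \<theta>^g"
    and a: "0 < a" and C: "0 \<le> C" and \<theta>: "0 < \<theta>" "\<theta> < 1" and c: "0 < c"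
    and H: "0 < H" "renyi_upper M k < ereal H" "c * (real k - 1) * H < real k"
  shows "\<exists>e \<gamma> D. 0 < \<gamma> \<and> eventually (\<lambda>n. measure Mk (no_grid_match c e n) \<le> D * real n powr (-\<gamma>)) sequentially"
proof -
  define s where "s = c * (real k - 1) * H"
  have s: "0 < s" "s < real k" using c H two_le_k by (simp_all add: s_def)
  define e where "e = (1 - s / real k) / 2"
  have "0 < s / real k" "s / real k < 1" using s by (auto simp: divide_less_eq)
  then have e: "0 < e" "0 < 1 - e" by (simp_all add: e_def)
  define q where "q = c * ln (real CARD('a))"
  define R where "R = 2 * q + 2 * s + 1"
  have "0 \<le> q" using c by (simp add: q_def)
  then have "0 < R" using s by (simp add: R_def)
  define \<gamma> where "\<gamma> = min (a * e) e"
  have "0 < \<gamma>" using a e by (simp add: \<gamma>_def)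
  obtain m0 where m0: "\<And>m. m \<ge> m0 \<Longrightarrow> exp (- (real k - 1) * real m * H) \<le> cyl_sum M k m"
    using eventually_cyl_sum_ge[OF H(2)] unfolding eventually_sequentially by blast
  have "0 < - ln \<theta>" using \<theta> by simp
  have "eventually (\<lambda>n::nat. 2 \<le> n) sequentially"
    and "eventually (\<lambda>n::nat. real m0 + 1 \<le> c * ln (real n)) sequentially"
    and "eventually (\<lambda>n::nat. c * ln (real n) \<le> real n powr e) sequentially"
    and "eventually (\<lambda>n::nat. 6 \<le> real n powr (1 - e)) sequentially"
    and "eventually (\<lambda>n::nat. R * ln (real n) \<le> - ln \<theta> * real n powr e) sequentially"
    and "eventually (\<lambda>n::nat. C \<le> real n powr R) sequentially"
    using c e \<open>0 < R\<close> \<open>0 < - ln \<theta>\<close> by real_asymp+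
  then have "eventually (\<lambda>n. measure Mk (no_grid_match c e n) \<le>
      (real k * 2^k + 2 * (real k * 6^k) * C + (real k * 6^k) * 6^k + 6 * (real k * 6^k)) * real n powr (-\<gamma>))
      sequentially"
  proof eventually_elim
    case (elim n)
    show ?case
      by (rule prob_no_grid_match_le_powr[OF mixing rates a C \<theta> c s(1,2) s_def e_def H(1) m0 q_def R_def \<gamma>_def elim])
  qed
  then show ?thesis using \<open>0 < \<gamma>\<close> by blast
qed

lemma cyl_mixing_if_alpha_mixing_exp:
  assumes "alpha_mixing_exp M"
  shows "\<exists>C \<theta>. 0 \<le> C \<and> 0 < \<theta> \<and> \<theta> < 1 \<and> (\<forall>m g. cyl_mixing m (m + g) 0 (C * \<theta>^g))"
proof -
  obtain C \<theta> :: real where \<theta>: "0 < \<theta>" "\<theta> < 1" and alpha: "\<forall>g n m A B. A \<in> cyl_alg n \<longrightarrow> B \<in> cyl_alg m \<longrightarrow>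
      \<bar>measure M (A \<inter> shift_pre (g + n) B) - measure M A * measure M B\<bar> \<le> C * \<theta> ^ g"
    using assms unfolding alpha_mixing_exp_def by blast
  have "\<bar>measure M (cyl [] \<inter> shift_pre (0 + 0) (cyl [])) - p [] * p []\<bar> \<le> C * \<theta> ^ 0"
    using alpha cyl_in_cyl_alg[of "[]" 0] by blast
  then have "0 \<le> C" by simp
  have "cyl_mixing m (m + g) 0 (C * \<theta>^g)" for m g
    unfolding cyl_mixing_def
  proof (intro allI impI)
    fix w w' :: "'a list" and d assume w: "length w = m" "length w' = m" and d: "m + g \<le> d"
    have "\<bar>measure M (cyl w \<inter> shift_pre ((d - m) + m) (cyl w')) - p w * p w'\<bar> \<le> C * \<theta> ^ (d - m)"
      using alpha cyl_in_cyl_alg[OF w(1)] cyl_in_cyl_alg[OF w(2)] by blast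
    moreover have "\<theta> ^ (d - m) \<le> \<theta> ^ g" using \<theta> d by (intro power_decreasing) auto
    then have "C * \<theta> ^ (d - m) \<le> C * \<theta> ^ g" using \<open>0 \<le> C\<close> by (rule mult_left_mono)
    ultimately show "measure M (cyl w \<inter> shift_pre d (cyl w')) \<le> p w * p w' * (1 + 0) + C * \<theta>^g"
      using d by simp
  qed
  then show ?thesis using \<open>0 \<le> C\<close> \<theta> by blast
qed

lemma cyl_mixing_if_psi_mixing_poly:
  assumes "psi_mixing_poly M a" "0 < a" "1 \<le> g"
  shows "cyl_mixing m (m + g) (real g powr (-a)) 0"
  unfolding cyl_mixing_def
proof (intro allI impI)
  fix w w' :: "'a list" and d assume w: "length w = m" "length w' = m" and d: "m + g \<le> d"
  have "1 \<le> d - m" using d assms(3) by simp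
  then have "\<bar>measure M (cyl w \<inter> shift_pre ((d - m) + m) (cyl w')) - p w * p w'\<bar>
      \<le> real (d - m) powr (-a) * p w * p w'"
    using assms(1) cyl_in_cyl_alg[OF w(1)] cyl_in_cyl_alg[OF w(2)] unfolding psi_mixing_poly_def by blast
  moreover have "real (d - m) powr (-a) \<le> real g powr (-a)" using d assms(2,3) by (intro powr_mono2') auto
  then have "real (d - m) powr (-a) * (p w * p w') \<le> real g powr (-a) * (p w * p w')"
    by (rule mult_right_mono) simp
  ultimately show "measure M (cyl w \<inter> shift_pre d (cyl w')) \<le> p w * p w' * (1 + real g powr (-a)) + 0"
    using d by (simp add: algebra_simps)
qed

lemma AE_liminf_match_len_ge_if_mixing_rates:
  fixes \<beta> \<delta> :: "nat \<Rightarrow> real"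
  assumes mixing: "\<forall>m g. 1 \<le> g \<longrightarrow> cyl_mixing m (m + g) (\<beta> g) (\<delta> g)"
    and rates: "\<forall>g\<ge>1. 0 \<le> \<beta> g \<and> \<beta> g \<le> real g powr (-a) \<and> 0 \<le> \<delta> g \<and> \<delta> g \<le> C * \<theta>^g"
    and a: "0 < a" and C: "0 \<le> C" and \<theta>: "0 < \<theta>" "\<theta> < 1" and c: "0 < c"
    and entropy: "renyi_upper M k < ereal (real k / ((real k - 1) * c))"
  shows "AE x in Mk. ereal c \<le> liminf (\<lambda>n. ereal (real (match_len k x n) / ln (real n)))"
proof -
  define t where "t = real k / ((real k - 1) * c)"
  have "0 < t" using c two_le_k by (simp add: t_def)
  moreover have "renyi_upper M k < ereal t" using entropy by (simp add: t_def)
  ultimately have "max (renyi_upper M k) (ereal (t / 2)) < ereal t" by simp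
  then obtain H where H: "max (renyi_upper M k) (ereal (t / 2)) < ereal H" "ereal H < ereal t"
    using ereal_dense2 by blast
  have "0 < H" "renyi_upper M k < ereal H" using H \<open>0 < t\<close> by auto
  moreover have "c * (real k - 1) * H < real k"
    using H(2) c two_le_k by (simp add: t_def pos_less_divide_eq mult_ac)
  ultimately obtain e \<gamma> D where "0 < \<gamma>"
    and ev: "eventually (\<lambda>n. measure Mk (no_grid_match c e n) \<le> D * real n powr (-\<gamma>)) sequentially"
    using eventually_prob_no_grid_match_le[OF mixing rates a C \<theta> c] by blast
  define \<rho> :: real where "\<rho> = 2 powr (-\<gamma>)"
  have \<rho>: "0 \<le> \<rho>" "\<rho> < 1" using \<open>0 < \<gamma>\<close> by (auto simp: \<rho>_def powr_less_one)
  have "strict_mono (\<lambda>l::nat. 2^l :: nat)" by (rule strict_monoI) simp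
  have "eventually (\<lambda>l. measure Mk (no_grid_match c e (2^l)) \<le> D * real (2^l) powr (-\<gamma>)) sequentially"
    using eventually_compose_filterlim[OF ev filterlim_subseq[OF \<open>strict_mono (\<lambda>l::nat. 2^l :: nat)\<close>]]
    by simp
  moreover have "real (2^l) powr (-\<gamma>) = \<rho>^l" for l :: nat
    by (simp add: \<rho>_def powr_realpow[symmetric] powr_powr mult.commute)
  ultimately have "AE x in Mk. eventually (\<lambda>l. x \<notin> no_grid_match c e (2^l)) sequentially"
    using no_grid_match_sets \<rho> by (intro Mk.AE_eventually_not_in_if_geometric) auto
  then show ?thesis
  proof (rule AE_mp[OF _ AE_I2[OF impI]])
    fix x assume x: "x \<in> space Mk" and "eventually (\<lambda>l. x \<notin> no_grid_match c e (2^l)) sequentially"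
    from this(2) have "eventually (\<lambda>l. c * (real l * ln 2) - 1 \<le> real (match_len k x (2^l))) sequentially"
    proof eventually_elim
      case (elim l)
      have "c * ln (real (2^l :: nat)) - 1 \<le> real (target_len c (2^l))"
        unfolding target_len_def by linarith
      moreover have "target_len c (2^l) \<le> match_len k x (2^l)"
        using target_len_le_match_len[OF x elim] .
      ultimately show ?case by (simp add: ln_realpow)
    qed
    then show "ereal c \<le> liminf (\<lambda>n. ereal (real (match_len k x n) / ln (real n)))"
      using c by (intro liminf_ge_of_dyadic_bound mono_match_len) auto
  qed
qed

lemma AE_liminf_match_len_ge:
  assumes mixing: "alpha_mixing_exp M \<or> (\<exists>a>0. psi_mixing_poly M a)"
    and c: "0 < c" and entropy: "renyi_upper M k < ereal (real k / ((real k - 1) * c))"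
  shows "AE x in Mk. ereal c \<le> liminf (\<lambda>n. ereal (real (match_len k x n) / ln (real n)))"
  using mixing
proof
  assume "alpha_mixing_exp M"
  then obtain C \<theta> where "0 \<le> C" "0 < \<theta>" "\<theta> < 1" "\<forall>m g. cyl_mixing m (m + g) 0 (C * \<theta>^g)"
    using cyl_mixing_if_alpha_mixing_exp by blast
  then show ?thesis
    by (intro AE_liminf_match_len_ge_if_mixing_rates[where a=1 and \<beta>="\<lambda>_. 0" and \<delta>="\<lambda>g. C * \<theta>^g"] c entropy)
      auto
next
  assume "\<exists>a>0. psi_mixing_poly M a"
  then obtain a where "0 < a" "psi_mixing_poly M a" by blast
  then show ?thesis
    by (intro AE_liminf_match_len_ge_if_mixing_rates[where \<beta>="\<lambda>g. real g powr (-a)" and \<delta>="\<lambda>_. 0"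
          and C=0 and \<theta>="1/2"] c entropy)
      (auto intro: cyl_mixing_if_psi_mixing_poly)
qed

lemma AE_limsup_match_len_le_renyi:
  assumes "0 < renyi_lower M k"
  shows "AE x in Mk. limsup (\<lambda>n. ereal (real (match_len k x n) / ln (real n)))
    \<le> ereal (real k) / (ereal (real k - 1) * renyi_lower M k)"
proof -
  obtain h where h: "renyi_lower M k = ereal h" "0 < h"
    using assms renyi_lower_le_upper renyi_upper_le by (cases "renyi_lower M k") auto
  have "ereal (real k) / (ereal (real k - 1) * renyi_lower M k) = ereal (real k / ((real k - 1) * h))"
    using h two_le_k by simp
  moreover have "AE x in Mk. limsup (\<lambda>n. ereal (real (match_len k x n) / ln (real n))) \<le> ereal c"
    if "real k / ((real k - 1) * h) < c" for c
  proof (rule AE_limsup_match_len_le)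
    have "0 < real k / ((real k - 1) * h)" using h two_le_k by simp
    then show "0 < c" using that by linarith
    then show "ereal (real k / ((real k - 1) * c)) < renyi_lower M k"
      using that h two_le_k divide_mult_less_swap[where x="real k" and y="real k - 1" and z=h and w=c] by simp
  qed
  ultimately show ?thesis by (simp add: AE_le_ereal_if_AE_le_above)
qed

lemma AE_liminf_match_len_ge_renyi:
  assumes "0 < renyi_lower M k" and mixing: "alpha_mixing_exp M \<or> (\<exists>a>0. psi_mixing_poly M a)"
  shows "AE x in Mk. ereal (real k) / (ereal (real k - 1) * renyi_upper M k)
    \<le> liminf (\<lambda>n. ereal (real (match_len k x n) / ln (real n)))"
proof -
  have "0 < renyi_upper M k" using assms(1) renyi_lower_le_upper by (rule less_le_trans)
  then obtain h where h: "renyi_upper M k = ereal h" "0 < h"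
    using renyi_upper_le by (cases "renyi_upper M k") auto
  have "ereal (real k) / (ereal (real k - 1) * renyi_upper M k) = ereal (real k / ((real k - 1) * h))"
    using h two_le_k by simp
  moreover have "AE x in Mk. ereal c \<le> liminf (\<lambda>n. ereal (real (match_len k x n) / ln (real n)))"
    if "0 < c" "c < real k / ((real k - 1) * h)" for c
  proof (rule AE_liminf_match_len_ge[OF mixing \<open>0 < c\<close>])
    show "renyi_upper M k < ereal (real k / ((real k - 1) * c))"
      using that h two_le_k less_divide_mult_swap[where x="real k" and y="real k - 1" and z=h and w=c] by simp
  qed
  moreover have "0 < real k / ((real k - 1) * h)" using h two_le_k by simp
  ultimately show ?thesis by (simp add: AE_ge_ereal_if_AE_ge_below)
qed

end

theorem mainTheorem7:
  fixes M :: "(nat \<Rightarrow> 'a::finite) measure" and k :: nat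
  assumes "symbolic_system M" and "k \<ge> 2" and "renyi_lower M k > 0"
  shows "(AE x in PiM {..<k} (\<lambda>_. M).
            limsup (\<lambda>n. ereal (real (match_len k x n) / ln (real n)))
              \<le> ereal (real k) / (ereal (real k - 1) * renyi_lower M k))
       \<and> ((alpha_mixing_exp M \<or> (\<exists>a>0. psi_mixing_poly M a)) \<longrightarrow>
           (AE x in PiM {..<k} (\<lambda>_. M).
              liminf (\<lambda>n. ereal (real (match_len k x n) / ln (real n)))
                \<ge> ereal (real k) / (ereal (real k - 1) * renyi_upper M k))
         \<and> (renyi_lower M k = renyi_upper M k \<longrightarrow>
             (AE x in PiM {..<k} (\<lambda>_. M).
                ((\<lambda>n. ereal (real (match_len k x n) / ln (real n)))
                  \<longlongrightarrow> ereal (real k) / (ereal (real k - 1) * renyi_lower M k)) sequentially)))"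
proof -
  interpret symbolic_matching M k
    using assms(1,2) by unfold_locales
  have upper: "AE x in Mk. limsup (\<lambda>n. ereal (real (match_len k x n) / ln (real n)))
      \<le> ereal (real k) / (ereal (real k - 1) * renyi_lower M k)"
    using assms(3) by (rule AE_limsup_match_len_le_renyi)
  have lower: "AE x in Mk. ereal (real k) / (ereal (real k - 1) * renyi_upper M k)
      \<le> liminf (\<lambda>n. ereal (real (match_len k x n) / ln (real n)))"
    if "alpha_mixing_exp M \<or> (\<exists>a>0. psi_mixing_poly M a)"
    using assms(3) that by (rule AE_liminf_match_len_ge_renyi)
  show ?thesis
  proof (intro conjI impI)
    show "AE x in Mk. limsup (\<lambda>n. ereal (real (match_len k x n) / ln (real n)))
      \<le> ereal (real k) / (ereal (real k - 1) * renyi_lower M k)" by (fact upper)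
  next
    assume "alpha_mixing_exp M \<or> (\<exists>a>0. psi_mixing_poly M a)"
    then show "AE x in Mk. ereal (real k) / (ereal (real k - 1) * renyi_upper M k)
      \<le> liminf (\<lambda>n. ereal (real (match_len k x n) / ln (real n)))" by (rule lower)
  next
    assume "alpha_mixing_exp M \<or> (\<exists>a>0. psi_mixing_poly M a)" and "renyi_lower M k = renyi_upper M k"
    note lower = lower[OF this(1)] and equal = this(2)
    from upper lower show "AE x in Mk. ((\<lambda>n. ereal (real (match_len k x n) / ln (real n)))
      \<longlongrightarrow> ereal (real k) / (ereal (real k - 1) * renyi_lower M k)) sequentially"
    proof eventually_elim
      case (elim x)
      then show ?case using equal by (intro tendsto_if_limsup_le_liminf) simp_all
    qed
  qed
qed

end
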